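(* Let $\gamma\in(0,1)$. There is a constant $c_2>0$, a polynomial in $\|D_x\|_\infty,\|D_u\|_\infty,\kappa,\kappa_B,\gamma^{-1},\bar w,G$ (independent of $n,m,H,\eta,t$), such that with $\epsilon_2(\eta,H)=c_2\eta n^2\sqrt mH^2$ the following holds. Let $H\ge\frac{\log(2\kappa^2)}{\log((1-\gamma)^{-1})}$, let $\epsilon$ be such that $\Omega_\epsilon\ne\emptyset$, and let $\{\bm M_t\}_{t=0}^T$ be the policies generated by OGD-BZ with constant stepsize $\eta>0$. Then for all $t$, $$\max_{1\le i\le k_x}|\mathring g^x_i(\bm M_t)-g^x_i(\bm M_{t-H+1:t})|\le\epsilon_2(\eta,H),\qquad\max_{1\le j\le k_u}|\mathring g^u_j(\bm M_t)-g^u_j(\bm M_{t-H:t})|\le\epsilon_2(\eta,H).$$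
   Context: System $x_{t+1}=Ax_t+Bu_t+w_t$, $A\in\mathbb R^{n\times n}$, $B\in\mathbb R^{n\times m}$, $x_0=0$, $w_t$ i.i.d. with $\|w_t\|_\infty\le\bar w$, $\bar w>0$. $D_x\in\mathbb R^{k_x\times n}$, $d_x\in\mathbb R^{k_x}$, $D_u\in\mathbb R^{k_u\times m}$, $d_u\in\mathbb R^{k_u}$, rows $D_{x,i}^\top$, $D_{u,j}^\top$; matrix $\|\cdot\|_\infty$ = max absolute row sum, $\|\cdot\|_2$ = spectral norm. Costs $c_t$ convex, differentiable, with $G>0$ such that $\|\nabla_xc_t(x,u)\|_2,\|\nabla_uc_t(x,u)\|_2\le Gb$ whenever $\|x\|_2,\|u\|_2\le b$. $K$ is $(\kappa,\gamma)$-strongly stable ($\kappa\ge1$) if $A-BK=Q^{-1}LQ$ with $\|L\|_2\le1-\gamma$, $\max(\|Q\|_2,\|Q^{-1}\|_2,\|K\|_2)\le\kappa$; $\kappa_B=\max(\|B\|_2,1)$. Fix a $(\kappa,\gamma)$-strongly stable $\mathbb K$, $A_{\mathbb K}=A-B\mathbb K$. Parameters $\bm M=(M^{[1]},\dots,M^{[H]})$, $M^{[i]}\in\mathbb R^{m\times n}$; $\mathcal M=\{\bm M:\|M^{[i]}\|_\infty\le2\sqrt n\kappa^3(1-\gamma)^{i-1}\}$; $\|\bm M\|_F$ is the Frobenius norm of all entries. $\Phi^x_k(\bm M_{t-H:t-1})=A_{\mathbb K}^{k-1}\mathds1_{(k\le H)}+\sum_{i=1}^HA_{\mathbb K}^{i-1}BM_{t-i}^{[k-i]}\mathds1_{(1\le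 k-i\le H)}$, $\Phi^u_k(\bm M_{t-H:t})=M_t^{[k]}\mathds1_{(k\le H)}-\mathbb K\Phi^x_k(\bm M_{t-H:t-1})$, $k=1,\dots,2H$. $g^x_i(\bm M_{t-H+1:t})=\bar w\sum_{k=1}^{2H}\|D_{x,i}^\top\Phi^x_k(\bm M_{t-H+1:t})\|_1$ ($\Phi^x_k$ with $t$ replaced by $t+1$), $g^u_j(\bm M_{t-H:t})=\bar w\sum_{k=1}^{2H}\|D_{u,j}^\top\Phi^u_k(\bm M_{t-H:t})\|_1$; $\mathring g^x_i(\bm M)=g^x_i(\bm M,\dots,\bm M)$, $\mathring g^u_j(\bm M)=g^u_j(\bm M,\dots,\bm M)$. $\Omega_\epsilon=\{\bm M\in\mathcal M:\mathring g^x_i(\bm M)\le d_{x,i}-\epsilon\ \forall i,\ \mathring g^u_j(\bm M)\le d_{u,j}-\epsilon\ \forall j\}$. With $\tilde x_t=\sum_{k=1}^{2H}\Phi^x_k(\bm M_{t-H:t-1})w_{t-k}$, $\tilde u_t=\sum_{k=1}^{2H}\Phi^u_k(\bm M_{t-H:t})w_{t-k}$ ($w_s=0$ for $s<0$), $\mathring f_t(\bm M)=\mathbb E[c_t(\tilde x_t,\tilde u_t)]$ with all $\bm M_s=\bm M$. OGD-BZ: pick $\bm M_0\in\Omega_\epsilon$; for $t=0,\dots,T$ apply $u_t=-\mathbb Kx_t+\sum_iM_t^{[i]}w_{t-i}$, observe $x_{t+1}$, record $w_t$, set $\bm M_{t+1}=\Pi_{\Omega_\epsilon}[\bm M_t-\eta\nabla\mathring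 f_t(\bm M_t)]$ (Frobenius projection). Convention: $\bm M_s=\bm M_0$ for $s<0$. *)

theory Defs
  imports "HOL-Probability.Probability"
begin

text \<open>Dimensions are explicit natural numbers (the polynomial constant
must be uniform in n, m, so dimensions cannot be type-indexed). A vector in R^d is a
function nat => real of which only the coordinates 0..d-1 are used; an r x c matrix is
a function nat => nat => real of which only the entries (i,j) with i<r, j<c are used.
A parameter M = (M^[1],...,M^[H]) is a function M i a b = (M^[i])_(a,b),
1 <= i <= H, a < m, b < n.\<close>

type_synonym vecr = "nat \<Rightarrow> real"
type_synonym matr = "nat \<Rightarrow> nat \<Rightarrow> real"
type_synonym param = "nat \<Rightarrow> nat \<Rightarrow> nat \<Rightarrow> real"

definition mmul :: "nat \<Rightarrow> matr \<Rightarrow> matr \<Rightarrow> matr" where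
  "mmul k X Y = (\<lambda>i j. \<Sum>l<k. X i l * Y l j)"

definition mid :: matr where
  "mid = (\<lambda>i j. if i = j then 1 else 0)"

fun mpow :: "nat \<Rightarrow> matr \<Rightarrow> nat \<Rightarrow> matr" where
  "mpow n X 0 = mid"
| "mpow n X (Suc k) = mmul n X (mpow n X k)"

definition mvmul :: "nat \<Rightarrow> matr \<Rightarrow> vecr \<Rightarrow> vecr" where
  "mvmul c X x = (\<lambda>i. \<Sum>j<c. X i j * x j)"

definition vnorm2 :: "nat \<Rightarrow> vecr \<Rightarrow> real" where
  "vnorm2 d x = sqrt (\<Sum>i<d. (x i)^2)"

definition spec_norm :: "nat \<Rightarrow> nat \<Rightarrow> matr \<Rightarrow> real" where
  "spec_norm r c X = Sup ((\<lambda>x. vnorm2 r (mvmul c X x)) ` {x. vnorm2 c x \<le> 1})"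

definition inf_norm :: "nat \<Rightarrow> nat \<Rightarrow> matr \<Rightarrow> real" where
  "inf_norm r c X = Max (insert 0 ((\<lambda>i. \<Sum>j<c. \<bar>X i j\<bar>) ` {..<r}))"

definition strongly_stable ::
  "nat \<Rightarrow> nat \<Rightarrow> matr \<Rightarrow> matr \<Rightarrow> real \<Rightarrow> real \<Rightarrow> matr \<Rightarrow> bool" where
  "strongly_stable n m A B \<kappa> \<gamma> K \<longleftrightarrow>
     (\<exists>Q Qi L.
        (\<forall>i<n. \<forall>j<n. mmul n Q Qi i j = mid i j \<and> mmul n Qi Q i j = mid i j) \<and>
        (\<forall>i<n. \<forall>j<n. A i j - mmul m B K i j = mmul n (mmul n Qi L) Q i j) \<and>
        spec_norm n n L \<le> 1 - \<gamma> \<and>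
        spec_norm n n Q \<le> \<kappa> \<and> spec_norm n n Qi \<le> \<kappa> \<and> spec_norm m n K \<le> \<kappa>)"

definition closed_loop :: "nat \<Rightarrow> matr \<Rightarrow> matr \<Rightarrow> matr \<Rightarrow> matr" where
  "closed_loop m A B K = (\<lambda>i j. A i j - mmul m B K i j)"

text \<open>Phi^x_k and Phi^u_k. hist s is the parameter M_s at (integer) time s.\<close>
definition Phix :: "nat \<Rightarrow> nat \<Rightarrow> nat \<Rightarrow> matr \<Rightarrow> matr \<Rightarrow> (int \<Rightarrow> param) \<Rightarrow> int \<Rightarrow> nat \<Rightarrow> matr" where
  "Phix n m H AK B hist t k = (\<lambda>r b.
      (if k \<le> H then mpow n AK (k - 1) r b else 0)
    + (\<Sum>i\<in>{1..H}. if i < k \<and> k - i \<le> H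
          then mmul m (mmul n (mpow n AK (i - 1)) B) (hist (t - int i) (k - i)) r b
          else 0))"

definition Phiu :: "nat \<Rightarrow> nat \<Rightarrow> nat \<Rightarrow> matr \<Rightarrow> matr \<Rightarrow> matr \<Rightarrow> (int \<Rightarrow> param) \<Rightarrow> int \<Rightarrow> nat \<Rightarrow> matr" where
  "Phiu n m H AK B K hist t k = (\<lambda>a b.
      (if k \<le> H then hist t k a b else 0) - mmul n K (Phix n m H AK B hist t k) a b)"

text \<open>g^x_i(M_{t-H+1:t}) (Phi^x with t replaced by t+1) and g^u_j(M_{t-H:t}).\<close>
definition gx :: "nat \<Rightarrow> nat \<Rightarrow> nat \<Rightarrow> matr \<Rightarrow> matr \<Rightarrow> real \<Rightarrow> matr \<Rightarrow> (int \<Rightarrow> param) \<Rightarrow> int \<Rightarrow> nat \<Rightarrow> real" where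
  "gx n m H AK B wbar Dx hist t i =
     wbar * (\<Sum>k\<in>{1..2*H}. \<Sum>b<n. \<bar>\<Sum>l<n. Dx i l * Phix n m H AK B hist (t + 1) k l b\<bar>)"

definition gu :: "nat \<Rightarrow> nat \<Rightarrow> nat \<Rightarrow> matr \<Rightarrow> matr \<Rightarrow> matr \<Rightarrow> real \<Rightarrow> matr \<Rightarrow> (int \<Rightarrow> param) \<Rightarrow> int \<Rightarrow> nat \<Rightarrow> real" where
  "gu n m H AK B K wbar Du hist t j =
     wbar * (\<Sum>k\<in>{1..2*H}. \<Sum>b<n. \<bar>\<Sum>a<m. Du j a * Phiu n m H AK B K hist t k a b\<bar>)"

text \<open>History of a policy sequence with the convention M_s = M_0 for s < 0.\<close>
definition histof :: "(nat \<Rightarrow> param) \<Rightarrow> int \<Rightarrow> param" where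
  "histof Ms = (\<lambda>s. Ms (nat s))"

definition valid_param :: "nat \<Rightarrow> nat \<Rightarrow> nat \<Rightarrow> param \<Rightarrow> bool" where
  "valid_param H m n M \<longleftrightarrow> (\<forall>i a b. M i a b \<noteq> 0 \<longrightarrow> 1 \<le> i \<and> i \<le> H \<and> a < m \<and> b < n)"

definition Mset :: "nat \<Rightarrow> nat \<Rightarrow> nat \<Rightarrow> real \<Rightarrow> real \<Rightarrow> param set" where
  "Mset n m H \<kappa> \<gamma> = {M. valid_param H m n M \<and>
      (\<forall>i\<in>{1..H}. inf_norm m n (M i) \<le> 2 * sqrt (real n) * \<kappa>^3 * (1 - \<gamma>)^(i - 1))}"

definition Omega :: "nat \<Rightarrow> nat \<Rightarrow> nat \<Rightarrow> nat \<Rightarrow> nat \<Rightarrow> matr \<Rightarrow> matr \<Rightarrow> matr \<Rightarrow> real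
     \<Rightarrow> matr \<Rightarrow> vecr \<Rightarrow> matr \<Rightarrow> vecr \<Rightarrow> real \<Rightarrow> real \<Rightarrow> real \<Rightarrow> param set" where
  "Omega n m kx ku H AK B K wbar Dx dx Du du \<kappa> \<gamma> \<epsilon> =
     {M \<in> Mset n m H \<kappa> \<gamma>.
        (\<forall>i<kx. gx n m H AK B wbar Dx (\<lambda>_. M) 0 i \<le> dx i - \<epsilon>) \<and>
        (\<forall>j<ku. gu n m H AK B K wbar Du (\<lambda>_. M) 0 j \<le> du j - \<epsilon>)}"

definition frob_dist :: "nat \<Rightarrow> nat \<Rightarrow> nat \<Rightarrow> param \<Rightarrow> param \<Rightarrow> real" where
  "frob_dist H m n M M' = sqrt (\<Sum>i\<in>{1..H}. \<Sum>a<m. \<Sum>b<n. (M i a b - M' i a b)^2)"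

definition proj_onto :: "nat \<Rightarrow> nat \<Rightarrow> nat \<Rightarrow> param set \<Rightarrow> param \<Rightarrow> param \<Rightarrow> bool" where
  "proj_onto H m n S y z \<longleftrightarrow> z \<in> S \<and> (\<forall>z'\<in>S. frob_dist H m n z y \<le> frob_dist H m n z' y)"

text \<open>Noise: omega t is the realisation of w_t; w_s = 0 for s < 0.\<close>
definition noise :: "(nat \<Rightarrow> vecr) \<Rightarrow> int \<Rightarrow> vecr" where
  "noise \<omega> s = (if s < 0 then (\<lambda>_. 0) else \<omega> (nat s))"

definition vecM :: "(nat \<Rightarrow> real) measure" where
  "vecM = Pi\<^sub>M UNIV (\<lambda>_. (borel :: real measure))"

definition noise_model :: "nat \<Rightarrow> real \<Rightarrow> (nat \<Rightarrow> vecr) measure \<Rightarrow> bool" where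
  "noise_model n wbar P \<longleftrightarrow>
     prob_space P \<and> sets P = sets (Pi\<^sub>M UNIV (\<lambda>_. vecM)) \<and>
     prob_space.indep_vars P (\<lambda>_. vecM) (\<lambda>t \<omega>. \<omega> t) UNIV \<and>
     (\<forall>t. distr P vecM (\<lambda>\<omega>. \<omega> t) = distr P vecM (\<lambda>\<omega>. \<omega> 0)) \<and>
     (AE \<omega> in P. \<forall>t. \<forall>b<n. \<bar>\<omega> t b\<bar> \<le> wbar)"

definition xtil :: "nat \<Rightarrow> nat \<Rightarrow> nat \<Rightarrow> matr \<Rightarrow> matr \<Rightarrow> param \<Rightarrow> int \<Rightarrow> (nat \<Rightarrow> vecr) \<Rightarrow> vecr" where
  "xtil n m H AK B M t \<omega> = (\<lambda>r. \<Sum>k\<in>{1..2*H}. \<Sum>b<n.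
       Phix n m H AK B (\<lambda>_. M) t k r b * noise \<omega> (t - int k) b)"

definition util :: "nat \<Rightarrow> nat \<Rightarrow> nat \<Rightarrow> matr \<Rightarrow> matr \<Rightarrow> matr \<Rightarrow> param \<Rightarrow> int \<Rightarrow> (nat \<Rightarrow> vecr) \<Rightarrow> vecr" where
  "util n m H AK B K M t \<omega> = (\<lambda>a. \<Sum>k\<in>{1..2*H}. \<Sum>b<n.
       Phiu n m H AK B K (\<lambda>_. M) t k a b * noise \<omega> (t - int k) b)"

definition fring :: "(nat \<Rightarrow> vecr) measure \<Rightarrow> (nat \<Rightarrow> vecr \<Rightarrow> vecr \<Rightarrow> real) \<Rightarrow> nat \<Rightarrow> nat \<Rightarrow> nat
     \<Rightarrow> matr \<Rightarrow> matr \<Rightarrow> matr \<Rightarrow> nat \<Rightarrow> param \<Rightarrow> real" where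
  "fring P c n m H AK B K t M =
     (\<integral>\<omega>. c t (xtil n m H AK B M (int t) \<omega>) (util n m H AK B K M (int t) \<omega>) \<partial>P)"

definition pgrad :: "nat \<Rightarrow> nat \<Rightarrow> nat \<Rightarrow> (param \<Rightarrow> real) \<Rightarrow> param \<Rightarrow> param \<Rightarrow> bool" where
  "pgrad H m n f M g \<longleftrightarrow> valid_param H m n g \<and>
     (\<forall>i\<in>{1..H}. \<forall>a<m. \<forall>b<n.
        ((\<lambda>s. f (\<lambda>i' a' b'. M i' a' b' + (if i' = i \<and> a' = a \<and> b' = b then s else 0)))
           has_real_derivative g i a b) (at 0))"

definition has_grad :: "nat \<Rightarrow> nat \<Rightarrow> (vecr \<Rightarrow> vecr \<Rightarrow> real) \<Rightarrow> vecr \<Rightarrow> vecr \<Rightarrow> vecr \<Rightarrow> vecr \<Rightarrow> bool" where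
  "has_grad n m f x u gx' gu' \<longleftrightarrow>
     (\<forall>e>0. \<exists>d>0. \<forall>h k. sqrt ((vnorm2 n h)^2 + (vnorm2 m k)^2) < d \<longrightarrow>
        \<bar>f (\<lambda>i. x i + h i) (\<lambda>j. u j + k j) - f x u - (\<Sum>i<n. gx' i * h i) - (\<Sum>j<m. gu' j * k j)\<bar>
          \<le> e * sqrt ((vnorm2 n h)^2 + (vnorm2 m k)^2))"

definition cost_model :: "nat \<Rightarrow> nat \<Rightarrow> real \<Rightarrow> (nat \<Rightarrow> vecr \<Rightarrow> vecr \<Rightarrow> real) \<Rightarrow> bool" where
  "cost_model n m G c \<longleftrightarrow>
     (\<forall>t x x' u u'. (\<forall>i<n. x i = x' i) \<and> (\<forall>j<m. u j = u' j) \<longrightarrow> c t x u = c t x' u') \<and>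
     (\<forall>t x u x' u' \<theta>. 0 \<le> \<theta> \<and> \<theta> \<le> 1 \<longrightarrow>
        c t (\<lambda>i. \<theta> * x i + (1 - \<theta>) * x' i) (\<lambda>j. \<theta> * u j + (1 - \<theta>) * u' j)
          \<le> \<theta> * c t x u + (1 - \<theta>) * c t x' u') \<and>
     (\<forall>t x u. \<exists>gx' gu'. has_grad n m (c t) x u gx' gu') \<and>
     (\<forall>t x u gx' gu' b. has_grad n m (c t) x u gx' gu' \<and> vnorm2 n x \<le> b \<and> vnorm2 m u \<le> b
        \<longrightarrow> vnorm2 n gx' \<le> G * b \<and> vnorm2 m gu' \<le> G * b)"

definition ogd_bz :: "(nat \<Rightarrow> param \<Rightarrow> real) \<Rightarrow> nat \<Rightarrow> nat \<Rightarrow> nat \<Rightarrow> param set \<Rightarrow> real \<Rightarrow> nat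
     \<Rightarrow> (nat \<Rightarrow> param) \<Rightarrow> bool" where
  "ogd_bz f H m n Om \<eta> T Ms \<longleftrightarrow> Ms 0 \<in> Om \<and>
     (\<forall>t\<le>T. \<exists>g. pgrad H m n (f t) (Ms t) g \<and>
        proj_onto H m n Om (\<lambda>i a b. Ms t i a b - \<eta> * g i a b) (Ms (Suc t)))"

text \<open>Real multivariate polynomial as a list of (coefficient, exponent list) monomials.\<close>
definition peval :: "(real \<times> nat list) list \<Rightarrow> real list \<Rightarrow> real" where
  "peval p xs = (\<Sum>(c, es) \<leftarrow> p. c * (\<Prod>i<length xs. (xs ! i) ^ (if i < length es then es ! i else 0)))"

end

theory Submission
  imports Defs
begin

(* For a fixed policy M the constraint functions see the disturbance-response matrices
   Phi(M, ..., M); along the OGD trajectory they see Phi(M_(t-H), ..., M_t).  Only the part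
   sum_i A_K^(i-1) B M^[k-i] of Phi depends on the policies, and it does so linearly, so the
   deviation is controlled by the sum over i of kappa^2 kappa_B (1 - gamma)^(i-1) |M_t - M_(t-i)|_F.
   Each OGD step moves the policy by at most 2 eta L, where L bounds the gradients: the projection
   is no farther from the gradient step than the current iterate, which is feasible.  Hence
   |M_t - M_(t-i)|_F <= 2 eta L i, and sum_i i (1 - gamma)^(i-1) <= 1 / gamma^2 gives the bound.
   The gradient bound L comes from convexity: along the bounded closed-loop trajectories the
   expected cost is Lipschitz, and a convex function grows along its gradient g at rate at least
   |g|^2, so |g| is at most the Lipschitz constant. *)

section \<open>Vector and matrix norms\<close>

lemma vnorm2_eq_L2_set: "vnorm2 d x = L2_set x {..<d}"
  by (simp add: vnorm2_def L2_set_def)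

lemma vnorm2_nonneg [simp]: "0 \<le> vnorm2 d x"
  by (simp add: vnorm2_def sum_nonneg)

lemma vnorm2_zero [simp]: "vnorm2 d (\<lambda>_. 0) = 0"
  by (simp add: vnorm2_def)

lemma vnorm2_minus [simp]: "vnorm2 d (\<lambda>i. - x i) = vnorm2 d x"
  by (simp add: vnorm2_def)

lemma vnorm2_cong: "(\<And>i. i < d \<Longrightarrow> x i = y i) \<Longrightarrow> vnorm2 d x = vnorm2 d y"
  unfolding vnorm2_def by (metis (no_types, lifting) lessThan_iff sum.cong)

lemma vnorm2_triangle: "vnorm2 d (\<lambda>i. x i + y i) \<le> vnorm2 d x + vnorm2 d y"
  unfolding vnorm2_eq_L2_set by (rule L2_set_triangle_ineq)

lemma vnorm2_scale: "vnorm2 d (\<lambda>i. a * x i) = \<bar>a\<bar> * vnorm2 d x"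
  unfolding vnorm2_def by (simp add: power_mult_distrib sum_distrib_left[symmetric] real_sqrt_mult)

lemma vnorm2_diff_commute: "vnorm2 d (\<lambda>i. x i - y i) = vnorm2 d (\<lambda>i. y i - x i)"
  by (simp add: vnorm2_def power2_commute)

lemma vnorm2_diff_le: "vnorm2 d (\<lambda>i. x i - y i) \<le> vnorm2 d x + vnorm2 d y"
  using vnorm2_triangle[of d x "\<lambda>i. - y i"] by simp

lemma vnorm2_sum_le:
  "finite J \<Longrightarrow> vnorm2 d (\<lambda>i. \<Sum>j\<in>J. f j i) \<le> (\<Sum>j\<in>J. vnorm2 d (f j))"
proof (induction J rule: finite_induct)
  case (insert a F)
  then show ?case
    using vnorm2_triangle[of d "f a" "\<lambda>i. \<Sum>j\<in>F. f j i"] by simp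
qed simp

lemma vnorm2_sum_if_le:
  assumes "finite J"
  shows "vnorm2 d (\<lambda>i. \<Sum>j\<in>J. if P j then f j i else 0) \<le> (\<Sum>j\<in>J. if P j then vnorm2 d (f j) else 0)"
proof -
  have "vnorm2 d (\<lambda>i. \<Sum>j\<in>J. if P j then f j i else 0) \<le> (\<Sum>j\<in>J. vnorm2 d (\<lambda>i. if P j then f j i else 0))"
    by (rule vnorm2_sum_le[OF assms])
  also have "\<dots> = (\<Sum>j\<in>J. if P j then vnorm2 d (f j) else 0)"
    by (intro sum.cong) auto
  finally show ?thesis .
qed

lemma abs_le_vnorm2: "i < d \<Longrightarrow> \<bar>x i\<bar> \<le> vnorm2 d x"
  unfolding vnorm2_eq_L2_set using member_le_L2_set[of "{..<d}" i "\<lambda>i. \<bar>x i\<bar>"]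
  by (simp add: L2_set_def)

lemma vnorm2_le_sqrt_dim:
  assumes "\<And>i. i < d \<Longrightarrow> \<bar>x i\<bar> \<le> w" and "0 \<le> w"
  shows "vnorm2 d x \<le> sqrt (real d) * w"
proof -
  have "(\<Sum>i<d. (x i)^2) \<le> (\<Sum>i<d. w^2)"
    by (intro sum_mono) (metis abs_le_square_iff abs_of_nonneg assms lessThan_iff)
  then have "vnorm2 d x \<le> sqrt (real d * w^2)" unfolding vnorm2_def by simp
  then show ?thesis using assms(2) by (simp add: real_sqrt_mult)
qed

lemma abs_inner_le_vnorm2: "\<bar>\<Sum>i<d. x i * y i\<bar> \<le> vnorm2 d x * vnorm2 d y"
proof -
  have "\<bar>\<Sum>i<d. x i * y i\<bar> \<le> (\<Sum>i<d. \<bar>x i\<bar> * \<bar>y i\<bar>)"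
    by (metis (no_types, lifting) abs_mult sum.cong sum_abs)
  also have "\<dots> \<le> vnorm2 d x * vnorm2 d y"
    unfolding vnorm2_eq_L2_set by (rule L2_set_mult_ineq)
  finally show ?thesis .
qed

lemma abs_row_inner_le: "\<bar>\<Sum>l<n. D i l * v l\<bar> \<le> (\<Sum>l<n. \<bar>D i l\<bar>) * vnorm2 n v"
proof -
  have "\<bar>\<Sum>l<n. D i l * v l\<bar> \<le> (\<Sum>l<n. \<bar>D i l\<bar> * \<bar>v l\<bar>)"
    by (metis (no_types, lifting) abs_mult sum.cong sum_abs)
  also have "\<dots> \<le> (\<Sum>l<n. \<bar>D i l\<bar> * vnorm2 n v)"
    by (intro sum_mono mult_left_mono abs_le_vnorm2) auto
  finally show ?thesis by (simp add: sum_distrib_right)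
qed

lemma abs_diff_sum_abs_le:
  fixes f g :: "'a \<Rightarrow> nat \<Rightarrow> real"
  shows "\<bar>(\<Sum>k\<in>A. \<Sum>b<n. \<bar>f k b\<bar>) - (\<Sum>k\<in>A. \<Sum>b<n. \<bar>g k b\<bar>)\<bar> \<le> (\<Sum>k\<in>A. \<Sum>b<n. \<bar>f k b - g k b\<bar>)"
proof -
  have "\<bar>(\<Sum>k\<in>A. \<Sum>b<n. \<bar>f k b\<bar>) - (\<Sum>k\<in>A. \<Sum>b<n. \<bar>g k b\<bar>)\<bar> = \<bar>\<Sum>k\<in>A. \<Sum>b<n. \<bar>f k b\<bar> - \<bar>g k b\<bar>\<bar>"
    by (simp only: sum_subtractf)
  also have "\<dots> \<le> (\<Sum>k\<in>A. \<Sum>b<n. \<bar>\<bar>f k b\<bar> - \<bar>g k b\<bar>\<bar>)"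
    by (rule order_trans[OF sum_abs sum_mono[OF sum_abs]])
  also have "\<dots> \<le> (\<Sum>k\<in>A. \<Sum>b<n. \<bar>f k b - g k b\<bar>)"
    by (intro sum_mono abs_triangle_ineq3)
  finally show ?thesis .
qed

lemma sum_abs_le_sqrt_card_L2_set: "(\<Sum>i\<in>A. \<bar>f i\<bar>) \<le> sqrt (real (card A)) * L2_set f A"
  using L2_set_mult_ineq[where f=f and g="\<lambda>_. 1" and A=A] by (simp add: L2_set_constant mult.commute)

definition frob_norm :: "nat \<Rightarrow> nat \<Rightarrow> matr \<Rightarrow> real" where
  "frob_norm r c X = sqrt (\<Sum>i<r. \<Sum>j<c. (X i j)^2)"

definition op_bound :: "nat \<Rightarrow> nat \<Rightarrow> matr \<Rightarrow> real \<Rightarrow> bool" where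
  "op_bound r c X \<beta> \<longleftrightarrow> (\<forall>x. vnorm2 r (mvmul c X x) \<le> \<beta> * vnorm2 c x)"

lemma frob_norm_nonneg [simp]: "0 \<le> frob_norm r c X"
  by (simp add: frob_norm_def sum_nonneg)

lemma frob_norm_eq_L2_set: "frob_norm r c X = L2_set (\<lambda>(i, j). X i j) ({..<r} \<times> {..<c})"
  unfolding frob_norm_def L2_set_def by (simp add: sum.cartesian_product case_prod_beta)

lemma frob_norm_eq_L2_set_columns: "frob_norm r c X = L2_set (\<lambda>j. vnorm2 r (\<lambda>i. X i j)) {..<c}"
  unfolding L2_set_def frob_norm_def vnorm2_def by (simp add: sum_nonneg sum.swap[of _ "{..<c}"])

lemma frob_norm_add_scaled_le:
  "frob_norm r c (\<lambda>i j. X i j + s * Y i j) \<le> frob_norm r c X + \<bar>s\<bar> * frob_norm r c Y"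
proof -
  have "frob_norm r c (\<lambda>i j. X i j + s * Y i j) \<le> frob_norm r c X + frob_norm r c (\<lambda>i j. s * Y i j)"
    unfolding frob_norm_eq_L2_set split_def by (rule L2_set_triangle_ineq)
  also have "frob_norm r c (\<lambda>i j. s * Y i j) = \<bar>s\<bar> * frob_norm r c Y"
    unfolding frob_norm_def by (simp add: power_mult_distrib sum_distrib_left[symmetric] real_sqrt_mult)
  finally show ?thesis .
qed

lemma mvmul_norm_le_frob_norm: "vnorm2 r (mvmul c X x) \<le> frob_norm r c X * vnorm2 c x"
proof -
  have "(mvmul c X x i)^2 \<le> (\<Sum>j<c. (X i j)^2) * (\<Sum>j<c. (x j)^2)" for i
  proof -
    have "(mvmul c X x i)^2 \<le> (vnorm2 c (X i) * vnorm2 c x)^2"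
      using abs_inner_le_vnorm2[where d=c and x="X i" and y=x] unfolding mvmul_def
      by (metis abs_ge_zero power2_abs power_mono)
    then show ?thesis by (simp add: vnorm2_def power_mult_distrib sum_nonneg)
  qed
  then have "(\<Sum>i<r. (mvmul c X x i)^2) \<le> (\<Sum>i<r. \<Sum>j<c. (X i j)^2) * (\<Sum>j<c. (x j)^2)"
    by (simp add: sum_distrib_right sum_mono)
  then show ?thesis unfolding vnorm2_def frob_norm_def
    by (metis real_sqrt_le_mono real_sqrt_mult)
qed

lemma frob_norm_le_inf_norm: "frob_norm m n X \<le> sqrt (real m) * inf_norm m n X"
proof -
  have inf0: "0 \<le> inf_norm m n X" unfolding inf_norm_def by (intro Max_ge_iff[THEN iffD2]) auto
  have "(\<Sum>b<n. (X a b)^2) \<le> (inf_norm m n X)^2" if "a < m" for a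
  proof -
    have "sqrt (\<Sum>b<n. (X a b)^2) \<le> (\<Sum>b<n. \<bar>X a b\<bar>)"
      using L2_set_le_sum_abs[of "X a" "{..<n}"] unfolding L2_set_def .
    also have "\<dots> \<le> inf_norm m n X" unfolding inf_norm_def using that by (intro Max_ge) auto
    finally have "sqrt (\<Sum>b<n. (X a b)^2) \<le> inf_norm m n X" .
    then show ?thesis by (metis real_sqrt_pow2 sum_nonneg zero_le_power2 power_mono real_sqrt_ge_zero)
  qed
  then have "(\<Sum>a<m. \<Sum>b<n. (X a b)^2) \<le> real m * (inf_norm m n X)^2"
    using sum_mono[of "{..<m}" "\<lambda>a. \<Sum>b<n. (X a b)^2" "\<lambda>_. (inf_norm m n X)^2"] by simp
  then show ?thesis unfolding frob_norm_def using inf0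
    by (metis abs_of_nonneg real_sqrt_abs real_sqrt_le_mono real_sqrt_mult)
qed

lemma row_abs_sum_le_inf_norm: "i < k \<Longrightarrow> (\<Sum>l<n. \<bar>D i l\<bar>) \<le> inf_norm k n D"
  unfolding inf_norm_def by (intro Max_ge) auto

lemma inf_norm_nonneg: "0 \<le> inf_norm k n D"
  unfolding inf_norm_def by (intro Max_ge_iff[THEN iffD2]) auto

lemma spec_norm_bdd_above: "bdd_above ((\<lambda>x. vnorm2 r (mvmul c X x)) ` {x. vnorm2 c x \<le> 1})"
proof (rule bdd_aboveI)
  fix y assume "y \<in> (\<lambda>x. vnorm2 r (mvmul c X x)) ` {x. vnorm2 c x \<le> 1}"
  then obtain z where z: "vnorm2 c z \<le> 1" "y = vnorm2 r (mvmul c X z)" by auto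
  then show "y \<le> frob_norm r c X"
    using mvmul_norm_le_frob_norm[of r c X z] mult_left_le[OF z(1) frob_norm_nonneg[of r c X]] by simp
qed

lemma spec_norm_nonneg: "0 \<le> spec_norm r c X"
proof -
  have "vnorm2 r (mvmul c X (\<lambda>_. 0)) \<le> spec_norm r c X"
    unfolding spec_norm_def by (rule cSup_upper[OF _ spec_norm_bdd_above]) auto
  then show ?thesis by (meson order_trans vnorm2_nonneg)
qed

lemma op_bound_spec_norm: "op_bound r c X (spec_norm r c X)"
  unfolding op_bound_def
proof
  fix x
  show "vnorm2 r (mvmul c X x) \<le> spec_norm r c X * vnorm2 c x"
  proof (cases "vnorm2 c x = 0")
    case True
    then show ?thesis using mvmul_norm_le_frob_norm[of r c X x] by simp
  next
    case False
    define \<nu> where "\<nu> = vnorm2 c x"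
    have "\<nu> > 0" using False vnorm2_nonneg[of c x] unfolding \<nu>_def by linarith
    have "mvmul c X (\<lambda>j. x j / \<nu>) = (\<lambda>i. (1 / \<nu>) * mvmul c X x i)"
      unfolding mvmul_def by (simp add: sum_distrib_left sum_divide_distrib)
    then have "vnorm2 r (mvmul c X x) = \<nu> * vnorm2 r (mvmul c X (\<lambda>j. x j / \<nu>))"
      using \<open>\<nu> > 0\<close> vnorm2_scale[of r "1 / \<nu>" "mvmul c X x"] by simp
    also have "vnorm2 r (mvmul c X (\<lambda>j. x j / \<nu>)) \<le> spec_norm r c X"
    proof -
      have "vnorm2 c (\<lambda>j. (1 / \<nu>) * x j) = 1"
        using \<open>\<nu> > 0\<close> unfolding vnorm2_scale \<nu>_def by simp
      then show ?thesis unfolding spec_norm_def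
        by (intro cSup_upper[OF _ spec_norm_bdd_above]) auto
    qed
    finally show ?thesis using \<open>\<nu> > 0\<close> unfolding \<nu>_def by (simp add: mult.commute)
  qed
qed

lemma op_bound_mono: "op_bound r c X \<beta> \<Longrightarrow> \<beta> \<le> \<beta>' \<Longrightarrow> op_bound r c X \<beta>'"
  unfolding op_bound_def by (meson mult_right_mono order_trans vnorm2_nonneg)

lemma op_boundD: "op_bound r c X \<beta> \<Longrightarrow> vnorm2 r (mvmul c X x) \<le> \<beta> * vnorm2 c x"
  unfolding op_bound_def by blast

lemma mvmul_cong: "(\<And>j. j < c \<Longrightarrow> x j = y j) \<Longrightarrow> mvmul c X x = mvmul c X y"
  unfolding mvmul_def by (intro ext sum.cong) auto

lemma mvmul_cong_matrix: "(\<And>j. j < c \<Longrightarrow> X i j = Y i j) \<Longrightarrow> mvmul c X x i = mvmul c Y x i"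
  unfolding mvmul_def by (intro sum.cong) auto

lemma mvmul_mmul: "mvmul c (mmul k X Y) x = mvmul k X (mvmul c Y x)"
proof
  fix i
  have "(\<Sum>j<c. (\<Sum>l<k. X i l * Y l j) * x j) = (\<Sum>l<k. \<Sum>j<c. X i l * (Y l j * x j))"
    by (simp add: sum_distrib_right mult.assoc sum.swap[of _ "{..<c}"])
  then show "mvmul c (mmul k X Y) x i = mvmul k X (mvmul c Y x) i"
    unfolding mvmul_def mmul_def by (simp add: sum_distrib_left)
qed

lemma mvmul_mid: "i < c \<Longrightarrow> mvmul c mid x i = x i"
  unfolding mvmul_def mid_def by (simp add: if_distrib[of "\<lambda>a. a * _"] sum.delta cong: if_cong)

lemma mvmul_sum: "mvmul c (\<lambda>i j. \<Sum>l\<in>L. X l i j) x = (\<lambda>i. \<Sum>l\<in>L. mvmul c (X l) x i)"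
  unfolding mvmul_def by (auto simp: sum_distrib_right intro!: ext sum.swap)

lemma mvmul_if: "mvmul c (\<lambda>i j. if P then X i j else 0) x = (if P then mvmul c X x else (\<lambda>_. 0))"
  unfolding mvmul_def by auto

lemma mvmul_linear_comb:
  "mvmul c (\<lambda>i j. \<alpha> * X i j + \<beta> * Y i j) x i = \<alpha> * mvmul c X x i + \<beta> * mvmul c Y x i"
  unfolding mvmul_def by (simp add: sum.distrib sum_distrib_left algebra_simps)

lemma mvmul_linear_comb_vec:
  "mvmul c X (\<lambda>j. \<alpha> * x j + \<beta> * y j) i = \<alpha> * mvmul c X x i + \<beta> * mvmul c X y i"
  unfolding mvmul_def by (simp add: sum.distrib sum_distrib_left algebra_simps)

lemma mmul_linear_comb:
  "mmul k X (\<lambda>i j. \<alpha> * Y i j + \<beta> * Z i j) i j = \<alpha> * mmul k X Y i j + \<beta> * mmul k X Z i j"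
  unfolding mmul_def by (simp add: sum.distrib sum_distrib_left algebra_simps)

definition unit_vec :: "nat \<Rightarrow> vecr" where
  "unit_vec b = (\<lambda>j. if j = b then 1 else 0)"

lemma mvmul_unit_vec: "b < c \<Longrightarrow> mvmul c X (unit_vec b) i = X i b"
  unfolding mvmul_def unit_vec_def by (simp add: if_distrib[of "\<lambda>a. _ * a"] sum.delta' cong: if_cong)

lemma sum_column_norms_le_frob_norm:
  "(\<Sum>b<n. vnorm2 m (mvmul n X (unit_vec b))) \<le> sqrt (real n) * frob_norm m n X"
proof -
  have "(\<Sum>b<n. vnorm2 m (mvmul n X (unit_vec b))) = (\<Sum>b<n. \<bar>vnorm2 m (\<lambda>a. X a b)\<bar>)"
    by (intro sum.cong refl) (simp add: mvmul_unit_vec cong: vnorm2_cong)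
  also have "\<dots> \<le> sqrt (real n) * frob_norm m n X"
    using sum_abs_le_sqrt_card_L2_set[of "\<lambda>b. vnorm2 m (\<lambda>a. X a b)" "{..<n}"]
    by (simp add: frob_norm_eq_L2_set_columns)
  finally show ?thesis .
qed

section \<open>Powers of a strongly stable closed loop\<close>

lemma op_bound_mpow:
  assumes "op_bound n n L \<beta>" "0 \<le> \<beta>"
  shows "op_bound n n (mpow n L k) (\<beta>^k)"
proof (induction k)
  case 0
  show ?case unfolding op_bound_def by (auto intro!: eq_refl vnorm2_cong simp: mvmul_mid)
next
  case (Suc k)
  show ?case unfolding op_bound_def
  proof
    fix x
    have "vnorm2 n (mvmul n (mpow n L (Suc k)) x) \<le> \<beta> * vnorm2 n (mvmul n (mpow n L k) x)"
      using op_boundD[OF assms(1)] by (simp add: mvmul_mmul)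
    also have "\<dots> \<le> \<beta> * (\<beta>^k * vnorm2 n x)"
      using op_boundD[OF Suc.IH] assms(2) by (rule mult_left_mono)
    finally show "vnorm2 n (mvmul n (mpow n L (Suc k)) x) \<le> \<beta>^Suc k * vnorm2 n x"
      by (simp add: ac_simps)
  qed
qed

lemma mvmul_inverse_cancel:
  assumes "\<forall>i<n. \<forall>j<n. mmul n Q Qi i j = mid i j" "i < n"
  shows "mvmul n Q (mvmul n Qi x) i = x i"
proof -
  have "mvmul n Q (mvmul n Qi x) i = mvmul n (mmul n Q Qi) x i" by (simp add: mvmul_mmul)
  also have "\<dots> = mvmul n mid x i" using assms by (intro mvmul_cong_matrix) auto
  finally show ?thesis using assms(2) by (simp add: mvmul_mid)
qed

lemma mvmul_mpow_similar:
  assumes inv: "\<forall>i<n. \<forall>j<n. mmul n Q Qi i j = mid i j \<and> mmul n Qi Q i j = mid i j"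
    and AK: "\<forall>i<n. \<forall>j<n. AK i j = mmul n (mmul n Qi L) Q i j"
    and "i < n"
  shows "mvmul n (mpow n AK k) x i = mvmul n Qi (mvmul n (mpow n L k) (mvmul n Q x)) i"
  using \<open>i < n\<close>
proof (induction k arbitrary: i)
  case 0
  have "mvmul n Qi (mvmul n mid (mvmul n Q x)) = mvmul n Qi (mvmul n Q x)"
    by (rule mvmul_cong) (simp add: mvmul_mid)
  with 0 inv show ?case by (simp add: mvmul_mid mvmul_inverse_cancel)
next
  case (Suc k)
  let ?y = "mvmul n (mpow n L k) (mvmul n Q x)"
  have "mvmul n (mpow n AK (Suc k)) x i = mvmul n (mmul n (mmul n Qi L) Q) (mvmul n (mpow n AK k) x) i"
    unfolding mpow.simps mvmul_mmul[of n n AK] using AK Suc.prems by (intro mvmul_cong_matrix) auto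
  also have "\<dots> = mvmul n Qi (mvmul n L (mvmul n Q (mvmul n Qi ?y))) i"
    using Suc.IH by (simp add: mvmul_mmul cong: mvmul_cong)
  also have "mvmul n L (mvmul n Q (mvmul n Qi ?y)) = mvmul n L ?y"
    using inv by (intro mvmul_cong mvmul_inverse_cancel) auto
  finally show ?case by (simp add: mvmul_mmul)
qed

lemma strongly_stable_op_bound_mpow:
  assumes "strongly_stable n m A B \<kappa> \<gamma> K" "\<gamma> \<le> 1"
  shows "op_bound n n (mpow n (closed_loop m A B K) k) (\<kappa>^2 * (1 - \<gamma>)^k)"
proof -
  obtain Q Qi L where inv: "\<forall>i<n. \<forall>j<n. mmul n Q Qi i j = mid i j \<and> mmul n Qi Q i j = mid i j"
    and AK: "\<forall>i<n. \<forall>j<n. A i j - mmul m B K i j = mmul n (mmul n Qi L) Q i j"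
    and nL: "spec_norm n n L \<le> 1 - \<gamma>" and nQ: "spec_norm n n Q \<le> \<kappa>" and nQi: "spec_norm n n Qi \<le> \<kappa>"
    using assms(1) unfolding strongly_stable_def by blast
  have oL: "op_bound n n (mpow n L k) ((1 - \<gamma>)^k)"
    using op_bound_mpow[OF op_bound_mono[OF op_bound_spec_norm nL]] assms(2) by simp
  have oQ: "op_bound n n Q \<kappa>" and oQi: "op_bound n n Qi \<kappa>"
    using op_bound_mono[OF op_bound_spec_norm] nQ nQi by blast+
  have "0 \<le> \<kappa>" using nQ spec_norm_nonneg order_trans by blast
  show ?thesis unfolding op_bound_def
  proof
    fix x
    have "vnorm2 n (mvmul n (mpow n (closed_loop m A B K) k) x)
        = vnorm2 n (mvmul n Qi (mvmul n (mpow n L k) (mvmul n Q x)))"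
      using inv AK by (intro vnorm2_cong mvmul_mpow_similar) (auto simp: closed_loop_def)
    also have "\<dots> \<le> \<kappa> * ((1 - \<gamma>)^k * (\<kappa> * vnorm2 n x))"
      using op_boundD[OF oQi] op_boundD[OF oL] op_boundD[OF oQ] \<open>0 \<le> \<kappa>\<close> assms(2)
      by (meson mult_left_mono order_trans zero_le_power diff_ge_0_iff_ge)
    finally show "vnorm2 n (mvmul n (mpow n (closed_loop m A B K) k) x)
        \<le> \<kappa>^2 * (1 - \<gamma>)^k * vnorm2 n x"
      by (simp add: power2_eq_square ac_simps)
  qed
qed

lemma strongly_stable_op_bound_gain:
  "strongly_stable n m A B \<kappa> \<gamma> K \<Longrightarrow> op_bound m n K \<kappa>"
  unfolding strongly_stable_def by (meson op_bound_mono op_bound_spec_norm)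

section \<open>Convex differentiable stage costs\<close>

definition jointly_convex :: "(vecr \<Rightarrow> vecr \<Rightarrow> real) \<Rightarrow> bool" where
  "jointly_convex f \<longleftrightarrow> (\<forall>x u x' u' \<theta>. 0 \<le> \<theta> \<and> \<theta> \<le> 1 \<longrightarrow>
     f (\<lambda>i. \<theta> * x i + (1 - \<theta>) * x' i) (\<lambda>j. \<theta> * u j + (1 - \<theta>) * u' j) \<le> \<theta> * f x u + (1 - \<theta>) * f x' u')"

lemma cost_model_jointly_convex: "cost_model n m G c \<Longrightarrow> jointly_convex (c t)"
  unfolding cost_model_def jointly_convex_def by blast

lemma has_grad_first_order:
  assumes cvx: "jointly_convex f" and hg: "has_grad n m f x u gvx gvu"
  shows "f x u + (\<Sum>i<n. gvx i * (y i - x i)) + (\<Sum>j<m. gvu j * (v j - u j)) \<le> f y v"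
proof -
  define h where "h = (\<lambda>i. y i - x i)"
  define k where "k = (\<lambda>j. v j - u j)"
  define lin where "lin = (\<Sum>i<n. gvx i * h i) + (\<Sum>j<m. gvu j * k j)"
  define \<nu> where "\<nu> = sqrt ((vnorm2 n h)^2 + (vnorm2 m k)^2)"
  have "0 \<le> \<nu>" unfolding \<nu>_def by simp
  have approx: "lin - e * \<nu> \<le> f y v - f x u" if "e > 0" for e
  proof -
    obtain d where "d > 0" and d: "\<And>h k. sqrt ((vnorm2 n h)^2 + (vnorm2 m k)^2) < d \<Longrightarrow>
        \<bar>f (\<lambda>i. x i + h i) (\<lambda>j. u j + k j) - f x u - (\<Sum>i<n. gvx i * h i) - (\<Sum>j<m. gvu j * k j)\<bar>
          \<le> e * sqrt ((vnorm2 n h)^2 + (vnorm2 m k)^2)"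
      using hg \<open>e > 0\<close> unfolding has_grad_def by blast
    define \<theta> where "\<theta> = min 1 (d / (2 * (\<nu> + 1)))"
    have "0 < \<theta>" "\<theta> \<le> 1" unfolding \<theta>_def using \<open>d > 0\<close> \<open>0 \<le> \<nu>\<close> by auto
    have "\<theta> * \<nu> \<le> d / (2 * (\<nu> + 1)) * \<nu>"
      unfolding \<theta>_def using \<open>0 \<le> \<nu>\<close> by (intro mult_right_mono) auto
    also have "\<dots> < d" using \<open>d > 0\<close> \<open>0 \<le> \<nu>\<close> by (simp add: field_simps add_nonneg_pos)
    finally have "\<theta> * \<nu> < d" .
    have scaled: "sqrt ((vnorm2 n (\<lambda>i. \<theta> * h i))^2 + (vnorm2 m (\<lambda>j. \<theta> * k j))^2) = \<theta> * \<nu>"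
      unfolding vnorm2_scale \<nu>_def using \<open>0 < \<theta>\<close>
      by (simp add: power_mult_distrib real_sqrt_mult flip: distrib_left)
    have "\<bar>f (\<lambda>i. x i + \<theta> * h i) (\<lambda>j. u j + \<theta> * k j) - f x u - \<theta> * lin\<bar> \<le> e * (\<theta> * \<nu>)"
      using d[of "\<lambda>i. \<theta> * h i" "\<lambda>j. \<theta> * k j"] \<open>\<theta> * \<nu> < d\<close>
      unfolding scaled lin_def by (simp add: sum_distrib_left algebra_simps)
    moreover have "f (\<lambda>i. x i + \<theta> * h i) (\<lambda>j. u j + \<theta> * k j) \<le> \<theta> * f y v + (1 - \<theta>) * f x u"
      using cvx \<open>0 < \<theta>\<close> \<open>\<theta> \<le> 1\<close> unfolding jointly_convex_def h_def k_def
      by (auto simp: algebra_simps elim!: allE[of _ y] allE[of _ x] allE[of _ v] allE[of _ u] allE[of _ \<theta>])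
    ultimately have "\<theta> * (lin - e * \<nu>) \<le> \<theta> * (f y v - f x u)"
      by (simp add: abs_le_iff algebra_simps)
    then show ?thesis using \<open>0 < \<theta>\<close> by simp
  qed
  have "lin \<le> f y v - f x u"
  proof (rule field_le_epsilon)
    fix e :: real assume "0 < e"
    have "lin - e / (\<nu> + 1) * \<nu> \<le> f y v - f x u" using approx[of "e / (\<nu> + 1)"] \<open>0 < e\<close> \<open>0 \<le> \<nu>\<close> by simp
    moreover have "e / (\<nu> + 1) * \<nu> \<le> e" using \<open>0 < e\<close> \<open>0 \<le> \<nu>\<close> by (simp add: field_simps)
    ultimately show "lin \<le> f y v - f x u + e" by simp
  qed
  then show ?thesis unfolding lin_def h_def k_def by simp
qed

lemma cost_model_diff_le:
  assumes cm: "cost_model n m G c" and "vnorm2 n x \<le> b" "vnorm2 m u \<le> b"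
  shows "c t x u - c t x' u' \<le> G * b * (vnorm2 n (\<lambda>i. x i - x' i) + vnorm2 m (\<lambda>j. u j - u' j))"
proof -
  have "\<exists>gvx gvu. has_grad n m (c t) x u gvx gvu"
    using cm unfolding cost_model_def by simp
  then obtain gvx gvu where hg: "has_grad n m (c t) x u gvx gvu" by blast
  have "vnorm2 n gvx \<le> G * b" "vnorm2 m gvu \<le> G * b"
    using cm hg assms(2,3) unfolding cost_model_def by auto
  then have "\<bar>\<Sum>i<n. gvx i * (x' i - x i)\<bar> \<le> G * b * vnorm2 n (\<lambda>i. x i - x' i)"
    and "\<bar>\<Sum>j<m. gvu j * (u' j - u j)\<bar> \<le> G * b * vnorm2 m (\<lambda>j. u j - u' j)"
    using abs_inner_le_vnorm2[where d=n and x=gvx and y="\<lambda>i. x' i - x i"]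
      abs_inner_le_vnorm2[where d=m and x=gvu and y="\<lambda>j. u' j - u j"]
    by (simp_all add: vnorm2_diff_commute[of _ x'] vnorm2_diff_commute[of _ u'])
       (meson mult_right_mono order_trans vnorm2_nonneg)+
  with has_grad_first_order[OF cost_model_jointly_convex[OF cm] hg, of x' u'] show ?thesis
    by (simp add: algebra_simps abs_le_iff)
qed

lemma cost_model_lipschitz:
  assumes "cost_model n m G c"
    and "vnorm2 n x \<le> b" "vnorm2 m u \<le> b" "vnorm2 n x' \<le> b" "vnorm2 m u' \<le> b"
  shows "\<bar>c t x u - c t x' u'\<bar> \<le> G * b * (vnorm2 n (\<lambda>i. x i - x' i) + vnorm2 m (\<lambda>j. u j - u' j))"
  using cost_model_diff_le[OF assms(1-3), of t x' u'] cost_model_diff_le[OF assms(1,4,5), of t x u]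
  by (simp add: abs_le_iff vnorm2_diff_commute[of _ x'] vnorm2_diff_commute[of _ u'])

lemma continuous_on_coordinate [continuous_intros]: "continuous_on S (\<lambda>z::nat \<Rightarrow> real. z i)"
  by (rule continuous_on_subset[OF continuous_on_product_coordinates]) auto

lemma cost_model_continuous:
  assumes cm: "cost_model n m G c"
  shows "continuous_on UNIV (\<lambda>z::nat \<Rightarrow> real. c t (\<lambda>i. z (2*i)) (\<lambda>j. z (2*j+1)))"
proof (intro continuous_at_imp_continuous_on ballI)
  fix z0 :: "nat \<Rightarrow> real"
  define x0 where "x0 = (\<lambda>i. z0 (2*i))"
  define u0 where "u0 = (\<lambda>j. z0 (2*j+1))"
  define dist0 where "dist0 z = vnorm2 n (\<lambda>i. z (2*i) - x0 i) + vnorm2 m (\<lambda>j. z (2*j+1) - u0 j)" for z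
  define b where "b = vnorm2 n x0 + vnorm2 m u0 + 1"
  have "continuous_on UNIV dist0"
    unfolding dist0_def vnorm2_def by (intro continuous_intros)
  moreover have "dist0 z0 = 0" unfolding dist0_def x0_def u0_def by simp
  ultimately have lim: "(dist0 \<longlongrightarrow> 0) (at z0)"
    by (metis continuous_on_eq_continuous_at isCont_def open_UNIV UNIV_I)
  have "eventually (\<lambda>z. dist0 z < 1) (at z0)" using lim by (rule order_tendstoD) simp
  then have "eventually (\<lambda>z. norm (c t (\<lambda>i. z (2*i)) (\<lambda>j. z (2*j+1)) - c t x0 u0) \<le> G * b * dist0 z) (at z0)"
  proof (rule eventually_mono)
    fix z assume near: "dist0 z < 1"
    have "vnorm2 n (\<lambda>i. z (2*i)) \<le> vnorm2 n x0 + vnorm2 n (\<lambda>i. z (2*i) - x0 i)"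
      using vnorm2_triangle[of n x0 "\<lambda>i. z (2*i) - x0 i"] by simp
    moreover have "vnorm2 m (\<lambda>j. z (2*j+1)) \<le> vnorm2 m u0 + vnorm2 m (\<lambda>j. z (2*j+1) - u0 j)"
      using vnorm2_triangle[of m u0 "\<lambda>j. z (2*j+1) - u0 j"] by simp
    moreover note vnorm2_nonneg[of n "\<lambda>i. z (2*i) - x0 i"] vnorm2_nonneg[of m "\<lambda>j. z (2*j+1) - u0 j"]
      vnorm2_nonneg[of n x0] vnorm2_nonneg[of m u0]
    ultimately have "vnorm2 n (\<lambda>i. z (2*i)) \<le> b" "vnorm2 m (\<lambda>j. z (2*j+1)) \<le> b"
      "vnorm2 n x0 \<le> b" "vnorm2 m u0 \<le> b"
      using near unfolding dist0_def b_def by linarith+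
    then show "norm (c t (\<lambda>i. z (2*i)) (\<lambda>j. z (2*j+1)) - c t x0 u0) \<le> G * b * dist0 z"
      unfolding dist0_def real_norm_def by (rule cost_model_lipschitz[OF cm])
  qed
  moreover have "((\<lambda>z. G * b * dist0 z) \<longlongrightarrow> 0) (at z0)"
    using tendsto_mult_right_zero[OF lim] by simp
  ultimately have "((\<lambda>z. c t (\<lambda>i. z (2*i)) (\<lambda>j. z (2*j+1)) - c t x0 u0) \<longlongrightarrow> 0) (at z0)"
    by (rule Lim_null_comparison)
  then show "isCont (\<lambda>z. c t (\<lambda>i. z (2*i)) (\<lambda>j. z (2*j+1))) z0"
    unfolding isCont_def x0_def u0_def by (rule LIM_zero_cancel)
qed

lemma cost_model_measurable:
  assumes "cost_model n m G c"
  shows "(\<lambda>z::nat \<Rightarrow> real. c t (\<lambda>i. z (2*i)) (\<lambda>j. z (2*j+1))) \<in> borel_measurable (Pi\<^sub>M UNIV (\<lambda>_. borel))"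
  using borel_measurable_continuous_onI[OF cost_model_continuous[OF assms]]
    measurable_cong_sets[OF sets_PiM_equal_borel refl]
  by blast

section \<open>Gradients of convex functions of the policy parameters\<close>

definition param_norm :: "nat \<Rightarrow> nat \<Rightarrow> nat \<Rightarrow> param \<Rightarrow> real" where
  "param_norm H m n V = sqrt (\<Sum>i\<in>{1..H}. \<Sum>a<m. \<Sum>b<n. (V i a b)^2)"

definition param_inner :: "nat \<Rightarrow> nat \<Rightarrow> nat \<Rightarrow> param \<Rightarrow> param \<Rightarrow> real" where
  "param_inner H m n V W = (\<Sum>i\<in>{1..H}. \<Sum>a<m. \<Sum>b<n. V i a b * W i a b)"

definition convex_param :: "(param \<Rightarrow> real) \<Rightarrow> bool" where
  "convex_param f \<longleftrightarrow> (\<forall>X Y \<theta>. 0 \<le> \<theta> \<and> \<theta> \<le> 1 \<longrightarrow>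
     f (\<lambda>i a b. \<theta> * X i a b + (1 - \<theta>) * Y i a b) \<le> \<theta> * f X + (1 - \<theta>) * f Y)"

definition dir_deriv_le :: "(param \<Rightarrow> real) \<Rightarrow> param \<Rightarrow> param \<Rightarrow> real \<Rightarrow> bool" where
  "dir_deriv_le f M V d \<longleftrightarrow> (\<forall>\<epsilon>>0. \<exists>\<delta>>0. \<forall>s. 0 < s \<and> s < \<delta> \<longrightarrow>
     f (\<lambda>i a b. M i a b + s * V i a b) - f M - s * d \<le> \<epsilon> * s)"

lemma param_norm_nonneg [simp]: "0 \<le> param_norm H m n V"
  by (simp add: param_norm_def sum_nonneg)

lemma param_norm_eq_L2_set:
  "param_norm H m n V = L2_set (\<lambda>(i, a, b). V i a b) ({1..H} \<times> {..<m} \<times> {..<n})"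
  unfolding param_norm_def L2_set_def by (simp add: sum.cartesian_product case_prod_beta)

lemma param_norm_scale: "param_norm H m n (\<lambda>i a b. s * V i a b) = \<bar>s\<bar> * param_norm H m n V"
  unfolding param_norm_def by (simp add: power_mult_distrib sum_distrib_left[symmetric] real_sqrt_mult)

lemma param_norm_triangle:
  "param_norm H m n (\<lambda>i a b. V i a b + W i a b) \<le> param_norm H m n V + param_norm H m n W"
  unfolding param_norm_eq_L2_set split_def by (rule L2_set_triangle_ineq)

lemma param_norm_square: "(param_norm H m n V)^2 = param_inner H m n V V"
  unfolding param_norm_def param_inner_def by (simp add: sum_nonneg power2_eq_square)

lemma frob_norm_le_param_norm: "j \<in> {1..H} \<Longrightarrow> frob_norm m n (V j) \<le> param_norm H m n V"
  unfolding frob_norm_def param_norm_def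
  by (intro real_sqrt_le_mono member_le_sum) (auto intro!: sum_nonneg)

lemma param_inner_add:
  "param_inner H m n g (\<lambda>i a b. V i a b + W i a b) = param_inner H m n g V + param_inner H m n g W"
  unfolding param_inner_def by (simp add: distrib_left sum.distrib)

lemma param_inner_minus: "param_inner H m n g (\<lambda>i a b. - V i a b) = - param_inner H m n g V"
  unfolding param_inner_def by (simp add: sum_negf)

lemma param_inner_coordinate:
  assumes "(i0, a0, b0) \<in> {1..H} \<times> {..<m} \<times> {..<n}"
  shows "param_inner H m n g (\<lambda>i a b. if (i, a, b) = (i0, a0, b0) then v else 0) = g i0 a0 b0 * v"
proof -
  have inner: "(\<Sum>b<n. g i a b * (if (i, a, b) = (i0, a0, b0) then v else 0))
      = (if i = i0 \<and> a = a0 then g i0 a0 b0 * v else 0)" for i a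
    using assms by (cases "i = i0 \<and> a = a0") (auto simp: if_distrib[of "\<lambda>x. _ * x"] cong: if_cong)
  have middle: "(\<Sum>a<m. if i = i0 \<and> a = a0 then g i0 a0 b0 * v else 0) = (if i = i0 then g i0 a0 b0 * v else 0)" for i
    using assms by (cases "i = i0") simp_all
  show ?thesis
    using assms unfolding param_inner_def inner middle by simp
qed

lemma real_derivative_remainder_le:
  assumes "(\<phi> has_real_derivative d) (at 0)" "\<epsilon> > 0"
  obtains \<delta> where "\<delta> > 0" "\<And>t. \<bar>t\<bar> < \<delta> \<Longrightarrow> \<bar>\<phi> t - \<phi> 0 - t * d\<bar> \<le> \<epsilon> * \<bar>t\<bar>"
proof -
  have "((\<lambda>t. (\<phi> t - \<phi> 0) / t) \<longlongrightarrow> d) (at 0)"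
    using assms(1) unfolding has_field_derivative_iff by simp
  then have "eventually (\<lambda>t. dist ((\<phi> t - \<phi> 0) / t) d < \<epsilon>) (at 0)"
    using tendstoD assms(2) by blast
  then obtain \<delta> where "\<delta> > 0"
    and \<delta>: "\<And>t. t \<noteq> 0 \<Longrightarrow> dist t 0 < \<delta> \<Longrightarrow> dist ((\<phi> t - \<phi> 0) / t) d < \<epsilon>"
    unfolding eventually_at by auto
  have "\<bar>\<phi> t - \<phi> 0 - t * d\<bar> \<le> \<epsilon> * \<bar>t\<bar>" if "\<bar>t\<bar> < \<delta>" for t
  proof (cases "t = 0")
    case False
    have "\<bar>(\<phi> t - \<phi> 0 - t * d) / t\<bar> < \<epsilon>"
      using \<delta>[OF False] that False by (simp add: dist_real_def diff_divide_distrib)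
    then show ?thesis using False by (simp add: abs_divide field_simps)
  qed simp
  with \<open>\<delta> > 0\<close> show ?thesis by (rule that)
qed

lemma dir_deriv_le_zero: "dir_deriv_le f M (\<lambda>_ _ _. 0) 0"
  unfolding dir_deriv_le_def by (auto intro: exI[of _ 1])

text \<open>Convexity makes upper bounds on one-sided directional derivatives subadditive, so the
  partial derivatives control every direction; this replaces Frechet differentiability.\<close>

lemma dir_deriv_le_add:
  assumes cvx: "convex_param f" and V: "dir_deriv_le f M V d" and W: "dir_deriv_le f M W e"
  shows "dir_deriv_le f M (\<lambda>i a b. V i a b + W i a b) (d + e)"
  unfolding dir_deriv_le_def
proof (intro allI impI)
  fix \<epsilon> :: real assume "\<epsilon> > 0"
  then have "\<epsilon> / 2 > 0" by simp
  obtain \<delta>1 where "\<delta>1 > 0"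
    and \<delta>1: "\<And>s. 0 < s \<Longrightarrow> s < \<delta>1 \<Longrightarrow> f (\<lambda>i a b. M i a b + s * V i a b) - f M - s * d \<le> \<epsilon> / 2 * s"
    using V[unfolded dir_deriv_le_def, rule_format, OF \<open>\<epsilon> / 2 > 0\<close>] by blast
  obtain \<delta>2 where "\<delta>2 > 0"
    and \<delta>2: "\<And>s. 0 < s \<Longrightarrow> s < \<delta>2 \<Longrightarrow> f (\<lambda>i a b. M i a b + s * W i a b) - f M - s * e \<le> \<epsilon> / 2 * s"
    using W[unfolded dir_deriv_le_def, rule_format, OF \<open>\<epsilon> / 2 > 0\<close>] by blast
  have "f (\<lambda>i a b. M i a b + s * (V i a b + W i a b)) - f M - s * (d + e) \<le> \<epsilon> * s"
    if "0 < s" "s < min \<delta>1 \<delta>2 / 2" for s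
  proof -
    define X where "X = (\<lambda>i a b. M i a b + 2 * s * V i a b)"
    define Y where "Y = (\<lambda>i a b. M i a b + 2 * s * W i a b)"
    have "(\<lambda>i a b. M i a b + s * (V i a b + W i a b)) = (\<lambda>i a b. 1/2 * X i a b + (1 - 1/2) * Y i a b)"
      unfolding X_def Y_def by (simp add: algebra_simps)
    then have "f (\<lambda>i a b. M i a b + s * (V i a b + W i a b)) \<le> 1/2 * f X + (1 - 1/2) * f Y"
      using cvx[unfolded convex_param_def, rule_format, of "1/2" X Y] by simp
    moreover have "f X - f M - 2 * s * d \<le> \<epsilon> / 2 * (2 * s)" "f Y - f M - 2 * s * e \<le> \<epsilon> / 2 * (2 * s)"
      using \<delta>1[of "2 * s"] \<delta>2[of "2 * s"] that unfolding X_def Y_def by (simp_all add: mult.assoc)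
    ultimately show ?thesis by (simp add: algebra_simps)
  qed
  then show "\<exists>\<delta>>0. \<forall>s. 0 < s \<and> s < \<delta> \<longrightarrow>
      f (\<lambda>i a b. M i a b + s * (V i a b + W i a b)) - f M - s * (d + e) \<le> \<epsilon> * s"
    using \<open>\<delta>1 > 0\<close> \<open>\<delta>2 > 0\<close> by (intro exI[of _ "min \<delta>1 \<delta>2 / 2"]) auto
qed

lemma dir_deriv_le_coordinate:
  assumes "((\<lambda>t. f (\<lambda>i a b. M i a b + (if (i, a, b) = (i0, a0, b0) then t else 0)))
             has_real_derivative d) (at 0)"
  shows "dir_deriv_le f M (\<lambda>i a b. if (i, a, b) = (i0, a0, b0) then v else 0) (d * v)"
  unfolding dir_deriv_le_def
proof (intro allI impI)
  fix \<epsilon> :: real assume "\<epsilon> > 0"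
  define \<phi> where "\<phi> t = f (\<lambda>i a b. M i a b + (if (i, a, b) = (i0, a0, b0) then t else 0))" for t
  have "(\<phi> has_real_derivative d) (at 0)" using assms unfolding \<phi>_def .
  moreover have "\<epsilon> / (\<bar>v\<bar> + 1) > 0" using \<open>\<epsilon> > 0\<close> by (simp add: add_nonneg_pos)
  ultimately obtain \<delta> where "\<delta> > 0"
    and \<delta>: "\<And>t. \<bar>t\<bar> < \<delta> \<Longrightarrow> \<bar>\<phi> t - \<phi> 0 - t * d\<bar> \<le> \<epsilon> / (\<bar>v\<bar> + 1) * \<bar>t\<bar>"
    by (rule real_derivative_remainder_le) blast
  have "f (\<lambda>i a b. M i a b + s * (if (i, a, b) = (i0, a0, b0) then v else 0)) - f M - s * (d * v) \<le> \<epsilon> * s"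
    if "0 < s" "s < \<delta> / (\<bar>v\<bar> + 1)" for s
  proof -
    have "s * \<bar>v\<bar> \<le> s * (\<bar>v\<bar> + 1)" using \<open>0 < s\<close> by simp
    also have "\<dots> < \<delta>" using that by (simp add: field_simps add_nonneg_pos)
    finally have "\<bar>s * v\<bar> < \<delta>" using \<open>0 < s\<close> by (simp add: abs_mult)
    have "\<epsilon> / (\<bar>v\<bar> + 1) * \<bar>s * v\<bar> \<le> \<epsilon> * s"
    proof -
      have "\<epsilon> / (\<bar>v\<bar> + 1) * \<bar>s * v\<bar> = \<epsilon> * s * (\<bar>v\<bar> / (\<bar>v\<bar> + 1))"
        using \<open>0 < s\<close> by (simp add: abs_mult)
      also have "\<dots> \<le> \<epsilon> * s"
        using \<open>0 < s\<close> \<open>\<epsilon> > 0\<close> by (intro mult_left_le) simp_all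
      finally show ?thesis .
    qed
    then have "\<phi> (s * v) - \<phi> 0 - s * v * d \<le> \<epsilon> * s"
      using abs_le_D1[OF \<delta>[OF \<open>\<bar>s * v\<bar> < \<delta>\<close>]] by linarith
    moreover have "f (\<lambda>i a b. M i a b + s * (if (i, a, b) = (i0, a0, b0) then v else 0)) = \<phi> (s * v)"
      unfolding \<phi>_def by (simp add: if_distrib[of "\<lambda>x. s * x"] cong: if_cong)
    moreover have "\<phi> 0 = f M" unfolding \<phi>_def by simp
    ultimately show ?thesis by (simp add: mult_ac)
  qed
  then show "\<exists>\<delta>>0. \<forall>s. 0 < s \<and> s < \<delta> \<longrightarrow> f (\<lambda>i a b. M i a b + s * (if (i, a, b) = (i0, a0, b0) then v else 0))
      - f M - s * (d * v) \<le> \<epsilon> * s"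
    using \<open>\<delta> > 0\<close> by (intro exI[of _ "\<delta> / (\<bar>v\<bar> + 1)"]) (auto simp: add_nonneg_pos)
qed

lemma pgrad_dir_deriv_le:
  assumes cvx: "convex_param f" and pg: "pgrad H m n f M g"
    and "finite J" "J \<subseteq> {1..H} \<times> {..<m} \<times> {..<n}" "\<forall>i a b. (i, a, b) \<notin> J \<longrightarrow> V i a b = 0"
  shows "dir_deriv_le f M V (param_inner H m n g V)"
  using assms(3-5)
proof (induction J arbitrary: V rule: finite_induct)
  case empty
  then have "V = (\<lambda>_ _ _. 0)" by (simp add: fun_eq_iff)
  then show ?case using dir_deriv_le_zero by (simp add: param_inner_def)
next
  case (insert j J)
  obtain i0 a0 b0 where j: "j = (i0, a0, b0)" by (cases j)
  define E where "E = (\<lambda>i a b. if (i, a, b) = (i0, a0, b0) then V i0 a0 b0 else 0)"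
  define V' where "V' = (\<lambda>i a b. if (i, a, b) = (i0, a0, b0) then 0 else V i a b)"
  have "(i0, a0, b0) \<in> {1..H} \<times> {..<m} \<times> {..<n}" using insert.prems j by auto
  have "dir_deriv_le f M V' (param_inner H m n g V')"
    using insert.prems j by (intro insert.IH) (auto simp: V'_def)
  moreover have "dir_deriv_le f M E (g i0 a0 b0 * V i0 a0 b0)"
    unfolding E_def using pg \<open>(i0, a0, b0) \<in> _\<close>
    by (intro dir_deriv_le_coordinate) (auto simp: pgrad_def)
  moreover have "param_inner H m n g E = g i0 a0 b0 * V i0 a0 b0"
    unfolding E_def using \<open>(i0, a0, b0) \<in> _\<close> by (rule param_inner_coordinate)
  ultimately have "dir_deriv_le f M (\<lambda>i a b. V' i a b + E i a b) (param_inner H m n g V' + param_inner H m n g E)"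
    using dir_deriv_le_add[OF cvx] by simp
  moreover have "(\<lambda>i a b. V' i a b + E i a b) = V" by (auto simp: V'_def E_def fun_eq_iff)
  ultimately show ?case by (simp add: param_inner_add[symmetric])
qed

text \<open>Convexity turns the one-sided bound along \<open>-g\<close> into a lower bound for the increment
  along \<open>g\<close>; comparing with the assumed growth of \<open>f\<close> along \<open>g\<close> bounds \<open>\<parallel>g\<parallel>\<^sup>2\<close> by \<open>L \<parallel>g\<parallel>\<close>.\<close>

lemma convex_param_pgrad_le:
  assumes cvx: "convex_param f" and pg: "pgrad H m n f M g" and "0 \<le> L"
    and growth: "\<And>s. 0 < s \<Longrightarrow> s * param_norm H m n g \<le> 1 \<Longrightarrow>
        f (\<lambda>i a b. M i a b + s * g i a b) - f M \<le> s * L * param_norm H m n g"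
  shows "param_norm H m n g \<le> L"
proof -
  define N where "N = param_norm H m n g"
  have "valid_param H m n g" using pg unfolding pgrad_def by blast
  then have "\<forall>i a b. (i, a, b) \<notin> {1..H} \<times> {..<m} \<times> {..<n} \<longrightarrow> - g i a b = 0"
    unfolding valid_param_def by auto
  from pgrad_dir_deriv_le[OF cvx pg _ subset_refl this]
  have "dir_deriv_le f M (\<lambda>i a b. - g i a b) (- (N^2))"
    unfolding N_def param_norm_square param_inner_minus by simp
  have "N^2 \<le> L * N + \<epsilon>" if "\<epsilon> > 0" for \<epsilon>
  proof -
    obtain \<delta> where "\<delta> > 0"
      and \<delta>: "\<And>s. 0 < s \<Longrightarrow> s < \<delta> \<Longrightarrow> f (\<lambda>i a b. M i a b + s * - g i a b) - f M - s * - (N^2) \<le> \<epsilon> * s"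
      using \<open>dir_deriv_le f M _ _\<close>[unfolded dir_deriv_le_def, rule_format, OF \<open>\<epsilon> > 0\<close>] by blast
    define s where "s = min (1 / (N + 1)) (\<delta> / 2)"
    have "0 \<le> N" unfolding N_def by simp
    then have "0 < s" "s < \<delta>" unfolding s_def using \<open>\<delta> > 0\<close> by auto
    have "s * N \<le> 1 / (N + 1) * N" unfolding s_def using \<open>0 \<le> N\<close> by (intro mult_right_mono) auto
    also have "\<dots> \<le> 1" using \<open>0 \<le> N\<close> by (simp add: field_simps)
    finally have "s * N \<le> 1" .
    define X where "X = (\<lambda>i a b. M i a b + s * g i a b)"
    define Y where "Y = (\<lambda>i a b. M i a b + s * - g i a b)"
    have "M = (\<lambda>i a b. 1/2 * X i a b + (1 - 1/2) * Y i a b)"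
      unfolding X_def Y_def by (simp add: algebra_simps)
    then have "f M \<le> 1/2 * f X + (1 - 1/2) * f Y"
      using cvx[unfolded convex_param_def, rule_format, of "1/2" X Y] by simp
    moreover have "f Y - f M + s * N^2 \<le> \<epsilon> * s"
      using \<delta>[OF \<open>0 < s\<close> \<open>s < \<delta>\<close>] unfolding Y_def by simp
    moreover have "f X - f M \<le> s * L * N"
      using growth[OF \<open>0 < s\<close> \<open>s * N \<le> 1\<close>[unfolded N_def]] unfolding X_def N_def .
    ultimately have "s * N^2 \<le> s * (L * N + \<epsilon>)" by (simp add: algebra_simps)
    then show ?thesis using \<open>0 < s\<close> by simp
  qed
  then have "N * N \<le> L * N" by (simp add: field_le_epsilon power2_eq_square)
  moreover have "0 \<le> N" unfolding N_def by simp
  ultimately show ?thesis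
    using \<open>0 \<le> L\<close> unfolding N_def[symmetric] by (cases "N = 0") (auto intro: mult_right_le_imp_le)
qed

section \<open>Online gradient descent with projection\<close>

lemma frob_dist_eq_param_norm: "frob_dist H m n M M' = param_norm H m n (\<lambda>i a b. M i a b - M' i a b)"
  unfolding frob_dist_def param_norm_def ..

lemma frob_dist_self [simp]: "frob_dist H m n M M = 0"
  unfolding frob_dist_def by simp

lemma frob_dist_commute: "frob_dist H m n M M' = frob_dist H m n M' M"
  unfolding frob_dist_def by (simp add: power2_commute)

lemma frob_dist_triangle: "frob_dist H m n X Z \<le> frob_dist H m n X Y + frob_dist H m n Y Z"
  using param_norm_triangle[of H m n "\<lambda>i a b. X i a b - Y i a b" "\<lambda>i a b. Y i a b - Z i a b"]
  unfolding frob_dist_eq_param_norm by simp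

lemma ogd_bz_in_Omega:
  assumes "ogd_bz f H m n Om \<eta> T Ms" "s \<le> Suc T"
  shows "Ms s \<in> Om"
  using assms(2)
proof (induction s)
  case 0
  then show ?case using assms(1) unfolding ogd_bz_def by blast
next
  case (Suc s)
  then show ?case using assms(1) unfolding ogd_bz_def proj_onto_def by auto
qed

text \<open>The previous iterate is feasible, so the projection is at least as close to the gradient step as
  it is; no convexity of the feasible set is needed.\<close>

lemma ogd_bz_step_le:
  assumes ogd: "ogd_bz f H m n Om \<eta> T Ms" and "0 < \<eta>" and "s \<le> T"
    and grad: "\<And>s M g. s \<le> T \<Longrightarrow> M \<in> Om \<Longrightarrow> pgrad H m n (f s) M g \<Longrightarrow> param_norm H m n g \<le> L"
  shows "frob_dist H m n (Ms (Suc s)) (Ms s) \<le> 2 * \<eta> * L"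
proof -
  obtain g where pg: "pgrad H m n (f s) (Ms s) g"
    and proj: "proj_onto H m n Om (\<lambda>i a b. Ms s i a b - \<eta> * g i a b) (Ms (Suc s))"
    using ogd \<open>s \<le> T\<close> unfolding ogd_bz_def by blast
  let ?y = "\<lambda>i a b. Ms s i a b - \<eta> * g i a b"
  have "Ms s \<in> Om" using ogd_bz_in_Omega[OF ogd] \<open>s \<le> T\<close> by simp
  then have "frob_dist H m n (Ms (Suc s)) ?y \<le> frob_dist H m n (Ms s) ?y"
    using proj unfolding proj_onto_def by blast
  moreover have "frob_dist H m n (Ms s) ?y = \<eta> * param_norm H m n g"
    unfolding frob_dist_eq_param_norm using param_norm_scale[of H m n \<eta> g] \<open>0 < \<eta>\<close> by simp
  moreover have "\<eta> * param_norm H m n g \<le> \<eta> * L"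
    using grad[OF \<open>s \<le> T\<close> \<open>Ms s \<in> Om\<close> pg] \<open>0 < \<eta>\<close> by simp
  ultimately show ?thesis
    using frob_dist_triangle[where H=H and m=m and n=n and X="Ms (Suc s)" and Y="?y" and Z="Ms s"] frob_dist_commute[of H m n "Ms s" ?y]
    by linarith
qed

lemma frob_dist_le_steps:
  assumes step: "\<And>s. s < T \<Longrightarrow> frob_dist H m n (Ms (Suc s)) (Ms s) \<le> \<delta>"
  shows "s \<le> t \<Longrightarrow> t \<le> T \<Longrightarrow> frob_dist H m n (Ms t) (Ms s) \<le> \<delta> * real (t - s)"
proof (induction t)
  case (Suc t)
  show ?case
  proof (cases "s = Suc t")
    case False
    then have "s \<le> t" using Suc.prems by simp
    have "frob_dist H m n (Ms (Suc t)) (Ms s) \<le> frob_dist H m n (Ms (Suc t)) (Ms t) + frob_dist H m n (Ms t) (Ms s)"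
      by (rule frob_dist_triangle)
    also have "\<dots> \<le> \<delta> + \<delta> * real (t - s)"
      using step[of t] Suc.IH \<open>s \<le> t\<close> Suc.prems by (intro add_mono) auto
    also have "\<dots> = \<delta> * real (Suc t - s)" using \<open>s \<le> t\<close> by (simp add: Suc_diff_le algebra_simps)
    finally show ?thesis .
  qed simp
qed simp

lemma ogd_bz_history_dist_le:
  assumes ogd: "ogd_bz f H m n Om \<eta> T Ms" and "0 < \<eta>" and "0 \<le> L"
    and grad: "\<And>s M g. s \<le> T \<Longrightarrow> M \<in> Om \<Longrightarrow> pgrad H m n (f s) M g \<Longrightarrow> param_norm H m n g \<le> L"
    and "t \<le> T" "\<tau> \<le> int t" "int t - \<tau> \<le> int i"
  shows "param_norm H m n (\<lambda>i' a b. Ms t i' a b - histof Ms \<tau> i' a b) \<le> 2 * \<eta> * L * real i"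
proof -
  have "frob_dist H m n (Ms (Suc s)) (Ms s) \<le> 2 * \<eta> * L" if "s < Suc T" for s
    by (rule ogd_bz_step_le[OF ogd \<open>0 < \<eta>\<close>]) (use that grad in auto)
  then have "frob_dist H m n (Ms t) (Ms (nat \<tau>)) \<le> 2 * \<eta> * L * real (t - nat \<tau>)"
    using assms(5,6) by (intro frob_dist_le_steps[where T="Suc T"]) auto
  also have "\<dots> \<le> 2 * \<eta> * L * real i"
    using assms(2,3,6,7) by (intro mult_left_mono) auto
  finally show ?thesis unfolding frob_dist_eq_param_norm histof_def .
qed

section \<open>Disturbance-response matrices\<close>

lemma geometric_sum_le:
  fixes r :: real
  assumes "0 \<le> r" "r < 1"
  shows "(\<Sum>k\<in>{1..N}. r^(k - 1)) \<le> 1 / (1 - r)"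
proof -
  have "(\<Sum>k\<in>{1..N}. r^(k - 1)) = (1 - r^N) / (1 - r)"
    using assms by (simp add: sum.atLeast1_atMost_eq sum_gp_strict)
  also have "\<dots> \<le> 1 / (1 - r)" using assms by (intro divide_right_mono) auto
  finally show ?thesis .
qed

lemma weighted_geometric_sum_le:
  fixes r :: real
  assumes "0 \<le> r" "r < 1"
  shows "(\<Sum>k\<in>{1..N}. real k * r^(k - 1)) \<le> 1 / (1 - r)^2"
proof -
  have closed_form: "(\<Sum>k<N. real (Suc k) * r^k) * (1 - r)^2 = 1 - real (Suc N) * r^N + real N * r^Suc N" for N
    by (induction N) (simp_all add: power2_eq_square algebra_simps)
  have "real N * r^Suc N = (real N * r) * r^N" by simp
  also have "\<dots> \<le> real (Suc N) * r^N"
    using assms by (intro mult_right_mono) (auto intro: order_trans[of _ "real N"] simp: mult_left_le)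
  finally have "(\<Sum>k<N. real (Suc k) * r^k) * (1 - r)^2 \<le> 1" unfolding closed_form by simp
  then show ?thesis using assms by (simp add: sum.atLeast1_atMost_eq field_simps)
qed

lemma sum_shifted_le:
  fixes F :: "nat \<Rightarrow> real"
  assumes "1 \<le> i" and "\<And>j. 0 \<le> F j"
  shows "(\<Sum>k\<in>{1..2*H}. if i < k \<and> k - i \<le> H then F (k - i) else 0) \<le> (\<Sum>j\<in>{1..H}. F j)"
proof -
  let ?A = "{k \<in> {1..2*H}. i < k \<and> k - i \<le> H}"
  have "(\<Sum>k\<in>{1..2*H}. if i < k \<and> k - i \<le> H then F (k - i) else 0) = (\<Sum>k\<in>?A. F (k - i))"
    by (simp add: sum.inter_filter[symmetric])
  also have "\<dots> = (\<Sum>j\<in>(\<lambda>k. k - i) ` ?A. F j)"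
    by (subst sum.reindex) (auto simp: inj_on_def)
  also have "\<dots> \<le> (\<Sum>j\<in>{1..H}. F j)"
    using assms by (intro sum_mono2) auto
  finally show ?thesis .
qed

lemma sum_if_le_eq_sum:
  fixes H :: nat
  shows "(\<Sum>k\<in>{1..2*H}. if k \<le> H then F k else 0) = (\<Sum>k\<in>{1..H}. F k)"
proof -
  have "{k \<in> {1..2*H}. k \<le> H} = {1..H}" by auto
  then show ?thesis by (simp add: sum.inter_filter[symmetric])
qed

definition Phix_free :: "nat \<Rightarrow> nat \<Rightarrow> matr \<Rightarrow> nat \<Rightarrow> matr" where
  "Phix_free n H AK k = (\<lambda>r b. if k \<le> H then mpow n AK (k - 1) r b else 0)"

definition Phix_param :: "nat \<Rightarrow> nat \<Rightarrow> nat \<Rightarrow> matr \<Rightarrow> matr \<Rightarrow> (int \<Rightarrow> param) \<Rightarrow> int \<Rightarrow> nat \<Rightarrow> matr" where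
  "Phix_param n m H AK B hist t k = (\<lambda>r b. \<Sum>i\<in>{1..H}. if i < k \<and> k - i \<le> H
     then mmul m (mmul n (mpow n AK (i - 1)) B) (hist (t - int i) (k - i)) r b else 0)"

lemma Phix_eq_free_plus_param:
  "Phix n m H AK B hist t k = (\<lambda>r b. Phix_free n H AK k r b + Phix_param n m H AK B hist t k r b)"
  unfolding Phix_def Phix_free_def Phix_param_def ..

lemma Phix_param_linear_comb:
  "Phix_param n m H AK B (\<lambda>s i a b. \<alpha> * hA s i a b + \<beta> * hB s i a b) t k r b
    = \<alpha> * Phix_param n m H AK B hA t k r b + \<beta> * Phix_param n m H AK B hB t k r b"
proof -
  have "Phix_param n m H AK B (\<lambda>s i a b. \<alpha> * hA s i a b + \<beta> * hB s i a b) t k r b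
     = (\<Sum>i\<in>{1..H}. \<alpha> * (if i < k \<and> k - i \<le> H
          then mmul m (mmul n (mpow n AK (i - 1)) B) (hA (t - int i) (k - i)) r b else 0)
        + \<beta> * (if i < k \<and> k - i \<le> H
          then mmul m (mmul n (mpow n AK (i - 1)) B) (hB (t - int i) (k - i)) r b else 0))"
    unfolding Phix_param_def by (intro sum.cong refl) (simp add: mmul_linear_comb)
  then show ?thesis unfolding Phix_param_def by (simp add: sum.distrib sum_distrib_left)
qed

lemma Phix_const_minus_Phix:
  "Phix n m H AK B (\<lambda>_. M) t' k r b - Phix n m H AK B hist t k r b
    = Phix_param n m H AK B (\<lambda>s i a b. M i a b - hist s i a b) t k r b"
  using Phix_param_linear_comb[of n m H AK B 1 "\<lambda>_. M" "-1" hist t k r b]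
  unfolding Phix_eq_free_plus_param by (simp add: Phix_param_def)

lemma Phix_deviation_column:
  "b < n \<Longrightarrow> Phix n m H AK B (\<lambda>_. M) t' k l b - Phix n m H AK B hist t k l b
    = mvmul n (Phix_param n m H AK B (\<lambda>s i a b. M i a b - hist s i a b) t k) (unit_vec b) l"
  by (simp add: Phix_const_minus_Phix mvmul_unit_vec)

lemma Phiu_deviation_column:
  assumes "hist t = M" "b < n"
  shows "Phiu n m H AK B K (\<lambda>_. M) t' k a b - Phiu n m H AK B K hist t k a b
    = - mvmul n K (mvmul n (Phix_param n m H AK B (\<lambda>s i a b. M i a b - hist s i a b) t k) (unit_vec b)) a"
proof -
  have "mmul n K (Phix n m H AK B (\<lambda>_. M) t' k) a b - mmul n K (Phix n m H AK B hist t k) a b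
      = mvmul n K (\<lambda>l. Phix n m H AK B (\<lambda>_. M) t' k l b - Phix n m H AK B hist t k l b) a"
    unfolding mmul_def mvmul_def by (simp add: sum_subtractf right_diff_distrib)
  then show ?thesis
    using assms Phix_deviation_column[OF assms(2)] unfolding Phiu_def by simp
qed

lemma mvmul_Phix_param:
  "mvmul n (Phix_param n m H AK B hist t k) w = (\<lambda>r. \<Sum>i\<in>{1..H}. if i < k \<and> k - i \<le> H
     then mvmul n (mpow n AK (i - 1)) (mvmul m B (mvmul n (hist (t - int i) (k - i)) w)) r else 0)"
  unfolding Phix_param_def mvmul_sum by (simp add: mvmul_if mvmul_mmul if_distrib[of "\<lambda>X. X _"] cong: if_cong)

lemma mvmul_Phix_param_norm_le:
  assumes "\<And>j. op_bound n n (mpow n AK j) (\<kappa>^2 * (1 - \<gamma>)^j)" "op_bound n m B \<kappa>B"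
    and "0 \<le> \<kappa>B" "\<gamma> \<le> 1"
  shows "vnorm2 n (mvmul n (Phix_param n m H AK B hist t k) w) \<le> (\<Sum>i\<in>{1..H}. if i < k \<and> k - i \<le> H
     then \<kappa>^2 * (1 - \<gamma>)^(i - 1) * \<kappa>B * vnorm2 m (mvmul n (hist (t - int i) (k - i)) w) else 0)"
proof -
  have "vnorm2 n (mvmul n (Phix_param n m H AK B hist t k) w) \<le> (\<Sum>i\<in>{1..H}. if i < k \<and> k - i \<le> H
     then vnorm2 n (mvmul n (mpow n AK (i - 1)) (mvmul m B (mvmul n (hist (t - int i) (k - i)) w))) else 0)"
    unfolding mvmul_Phix_param by (rule vnorm2_sum_if_le) simp
  also have "\<dots> \<le> (\<Sum>i\<in>{1..H}. if i < k \<and> k - i \<le> H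
     then \<kappa>^2 * (1 - \<gamma>)^(i - 1) * \<kappa>B * vnorm2 m (mvmul n (hist (t - int i) (k - i)) w) else 0)"
  proof (intro sum_mono)
    fix i
    let ?v = "mvmul n (hist (t - int i) (k - i)) w"
    have "vnorm2 n (mvmul n (mpow n AK (i - 1)) (mvmul m B ?v)) \<le> \<kappa>^2 * (1 - \<gamma>)^(i - 1) * vnorm2 n (mvmul m B ?v)"
      using assms(1) by (rule op_boundD)
    also have "\<dots> \<le> \<kappa>^2 * (1 - \<gamma>)^(i - 1) * (\<kappa>B * vnorm2 m ?v)"
      using assms by (intro mult_left_mono op_boundD) auto
    finally show "(if i < k \<and> k - i \<le> H then vnorm2 n (mvmul n (mpow n AK (i - 1)) (mvmul m B ?v)) else 0)
        \<le> (if i < k \<and> k - i \<le> H then \<kappa>^2 * (1 - \<gamma>)^(i - 1) * \<kappa>B * vnorm2 m ?v else 0)"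
      by (simp add: ac_simps)
  qed
  finally show ?thesis .
qed

section \<open>States and inputs driven by bounded noise\<close>

definition x_free :: "nat \<Rightarrow> nat \<Rightarrow> matr \<Rightarrow> int \<Rightarrow> (nat \<Rightarrow> vecr) \<Rightarrow> vecr" where
  "x_free n H AK t \<omega> = (\<lambda>r. \<Sum>k\<in>{1..2*H}. mvmul n (Phix_free n H AK k) (noise \<omega> (t - int k)) r)"

definition x_param :: "nat \<Rightarrow> nat \<Rightarrow> nat \<Rightarrow> matr \<Rightarrow> matr \<Rightarrow> param \<Rightarrow> int \<Rightarrow> (nat \<Rightarrow> vecr) \<Rightarrow> vecr" where
  "x_param n m H AK B M t \<omega> =
     (\<lambda>r. \<Sum>k\<in>{1..2*H}. mvmul n (Phix_param n m H AK B (\<lambda>_. M) t k) (noise \<omega> (t - int k)) r)"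

definition u_feedforward :: "nat \<Rightarrow> nat \<Rightarrow> param \<Rightarrow> int \<Rightarrow> (nat \<Rightarrow> vecr) \<Rightarrow> vecr" where
  "u_feedforward n H M t \<omega> =
     (\<lambda>a. \<Sum>k\<in>{1..2*H}. if k \<le> H then mvmul n (M k) (noise \<omega> (t - int k)) a else 0)"

definition block_norm_sum :: "nat \<Rightarrow> nat \<Rightarrow> nat \<Rightarrow> param \<Rightarrow> real" where
  "block_norm_sum H m n V = (\<Sum>j\<in>{1..H}. frob_norm m n (V j))"

lemma xtil_eq: "xtil n m H AK B M t \<omega> = (\<lambda>r. x_free n H AK t \<omega> r + x_param n m H AK B M t \<omega> r)"
  unfolding xtil_def x_free_def x_param_def Phix_eq_free_plus_param mvmul_def
  by (simp add: distrib_right sum.distrib)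

lemma util_eq:
  "util n m H AK B K M t \<omega> = (\<lambda>a. u_feedforward n H M t \<omega> a - mvmul n K (xtil n m H AK B M t \<omega>) a)"
proof
  fix a
  let ?w = "\<lambda>k. noise \<omega> (t - int k)"
  let ?F = "\<lambda>k. Phix n m H AK B (\<lambda>_. M) t k"
  have "util n m H AK B K M t \<omega> a = (\<Sum>k\<in>{1..2*H}. \<Sum>b<n. (if k \<le> H then M k a b else 0) * ?w k b)
      - (\<Sum>k\<in>{1..2*H}. \<Sum>b<n. mmul n K (?F k) a b * ?w k b)"
    unfolding util_def Phiu_def by (simp add: left_diff_distrib sum_subtractf)
  also have "(\<Sum>k\<in>{1..2*H}. \<Sum>b<n. (if k \<le> H then M k a b else 0) * ?w k b) = u_feedforward n H M t \<omega> a"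
    unfolding u_feedforward_def mvmul_def by (intro sum.cong refl) auto
  also have "(\<Sum>k\<in>{1..2*H}. \<Sum>b<n. mmul n K (?F k) a b * ?w k b)
      = (\<Sum>k\<in>{1..2*H}. \<Sum>b<n. \<Sum>l<n. K a l * (?F k l b * ?w k b))"
    unfolding mmul_def by (simp add: sum_distrib_right mult.assoc)
  also have "\<dots> = (\<Sum>l<n. \<Sum>k\<in>{1..2*H}. \<Sum>b<n. K a l * (?F k l b * ?w k b))"
    by (subst sum.swap) (intro sum.cong refl sum.swap)
  also have "\<dots> = mvmul n K (xtil n m H AK B M t \<omega>) a"
    unfolding mvmul_def xtil_def by (simp add: sum_distrib_left)
  finally show "util n m H AK B K M t \<omega> a = u_feedforward n H M t \<omega> a - mvmul n K (xtil n m H AK B M t \<omega>) a" .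
qed

lemma x_param_linear_comb:
  "x_param n m H AK B (\<lambda>i a b. \<alpha> * M1 i a b + \<beta> * M2 i a b) t \<omega> r
    = \<alpha> * x_param n m H AK B M1 t \<omega> r + \<beta> * x_param n m H AK B M2 t \<omega> r"
proof -
  have "Phix_param n m H AK B (\<lambda>_ i a b. \<alpha> * M1 i a b + \<beta> * M2 i a b) t k
      = (\<lambda>r b. \<alpha> * Phix_param n m H AK B (\<lambda>_. M1) t k r b + \<beta> * Phix_param n m H AK B (\<lambda>_. M2) t k r b)" for k
    using Phix_param_linear_comb[where hA="\<lambda>_. M1" and hB="\<lambda>_. M2"] by (intro ext) simp
  then show ?thesis unfolding x_param_def
    by (simp add: mvmul_linear_comb sum.distrib sum_distrib_left)
qed

lemma u_feedforward_linear_comb: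
  "u_feedforward n H (\<lambda>i a b. \<alpha> * M1 i a b + \<beta> * M2 i a b) t \<omega> r
    = \<alpha> * u_feedforward n H M1 t \<omega> r + \<beta> * u_feedforward n H M2 t \<omega> r"
proof -
  have "u_feedforward n H (\<lambda>i a b. \<alpha> * M1 i a b + \<beta> * M2 i a b) t \<omega> r
     = (\<Sum>k\<in>{1..2*H}. \<alpha> * (if k \<le> H then mvmul n (M1 k) (noise \<omega> (t - int k)) r else 0)
          + \<beta> * (if k \<le> H then mvmul n (M2 k) (noise \<omega> (t - int k)) r else 0))"
    unfolding u_feedforward_def by (intro sum.cong refl) (simp add: mvmul_linear_comb)
  then show ?thesis unfolding u_feedforward_def by (simp add: sum.distrib sum_distrib_left)
qed

lemma xtil_convex_comb:
  assumes "\<alpha> + \<beta> = 1"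
  shows "xtil n m H AK B (\<lambda>i a b. \<alpha> * M1 i a b + \<beta> * M2 i a b) t \<omega>
    = (\<lambda>r. \<alpha> * xtil n m H AK B M1 t \<omega> r + \<beta> * xtil n m H AK B M2 t \<omega> r)"
proof -
  have "x_free n H AK t \<omega> r = \<alpha> * x_free n H AK t \<omega> r + \<beta> * x_free n H AK t \<omega> r" for r
    using assms by (metis distrib_right mult_1)
  then show ?thesis unfolding xtil_eq x_param_linear_comb by (intro ext) (simp add: algebra_simps)
qed

lemma util_convex_comb:
  assumes "\<alpha> + \<beta> = 1"
  shows "util n m H AK B K (\<lambda>i a b. \<alpha> * M1 i a b + \<beta> * M2 i a b) t \<omega>
    = (\<lambda>r. \<alpha> * util n m H AK B K M1 t \<omega> r + \<beta> * util n m H AK B K M2 t \<omega> r)"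
  unfolding util_eq xtil_convex_comb[OF assms] u_feedforward_linear_comb mvmul_linear_comb_vec
  by (intro ext) (simp add: algebra_simps)

lemma xtil_perturb:
  "xtil n m H AK B (\<lambda>i a b. M i a b + s * V i a b) t \<omega>
    = (\<lambda>r. xtil n m H AK B M t \<omega> r + s * x_param n m H AK B V t \<omega> r)"
  using x_param_linear_comb[of n m H AK B 1 M s V t \<omega>] unfolding xtil_eq by (intro ext) simp

lemma util_perturb:
  "util n m H AK B K (\<lambda>i a b. M i a b + s * V i a b) t \<omega>
    = (\<lambda>a. util n m H AK B K M t \<omega> a
          + s * (u_feedforward n H V t \<omega> a - mvmul n K (x_param n m H AK B V t \<omega>) a))"
  using u_feedforward_linear_comb[of n H 1 M s V t \<omega>]
    mvmul_linear_comb_vec[of n K 1 "xtil n m H AK B M t \<omega>" s "x_param n m H AK B V t \<omega>"]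
  unfolding util_eq xtil_perturb by (intro ext) (simp add: algebra_simps)

lemma block_norm_sum_nonneg [simp]: "0 \<le> block_norm_sum H m n V"
  unfolding block_norm_sum_def by (simp add: sum_nonneg)

lemma block_norm_sum_perturb_le:
  "block_norm_sum H m n (\<lambda>i a b. M i a b + s * V i a b) \<le> block_norm_sum H m n M + \<bar>s\<bar> * block_norm_sum H m n V"
  unfolding block_norm_sum_def
  by (simp add: sum_distrib_left sum.distrib[symmetric] frob_norm_add_scaled_le sum_mono)

lemma block_norm_sum_le_param_norm: "block_norm_sum H m n V \<le> sqrt (real H) * param_norm H m n V"
proof -
  have "block_norm_sum H m n V \<le> sqrt (real (card {1..H})) * L2_set (\<lambda>j. frob_norm m n (V j)) {1..H}"
    using sum_abs_le_sqrt_card_L2_set[of "\<lambda>j. frob_norm m n (V j)" "{1..H}"]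
    unfolding block_norm_sum_def by simp
  also have "L2_set (\<lambda>j. frob_norm m n (V j)) {1..H} = param_norm H m n V"
    unfolding L2_set_def param_norm_def frob_norm_def by (simp add: sum_nonneg)
  finally show ?thesis by simp
qed

lemma block_norm_sum_Mset_le:
  assumes "M \<in> Mset n m H \<kappa> \<gamma>" "0 < \<gamma>" "\<gamma> < 1" "0 \<le> \<kappa>"
  shows "block_norm_sum H m n M \<le> 2 * sqrt (real n) * \<kappa>^3 * sqrt (real m) / \<gamma>"
proof -
  have "block_norm_sum H m n M \<le> (\<Sum>j\<in>{1..H}. sqrt (real m) * (2 * sqrt (real n) * \<kappa>^3 * (1 - \<gamma>)^(j - 1)))"
    unfolding block_norm_sum_def
  proof (rule sum_mono)
    fix j assume "j \<in> {1..H}"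
    then have "inf_norm m n (M j) \<le> 2 * sqrt (real n) * \<kappa>^3 * (1 - \<gamma>)^(j - 1)"
      using assms(1) unfolding Mset_def by auto
    then show "frob_norm m n (M j) \<le> sqrt (real m) * (2 * sqrt (real n) * \<kappa>^3 * (1 - \<gamma>)^(j - 1))"
      using frob_norm_le_inf_norm[of m n "M j"] by (meson mult_left_mono order_trans real_sqrt_ge_zero of_nat_0_le_iff)
  qed
  also have "\<dots> = sqrt (real m) * (2 * sqrt (real n) * \<kappa>^3) * (\<Sum>j\<in>{1..H}. (1 - \<gamma>)^(j - 1))"
    by (simp add: sum_distrib_left ac_simps)
  also have "\<dots> \<le> sqrt (real m) * (2 * sqrt (real n) * \<kappa>^3) * (1 / \<gamma>)"
    using geometric_sum_le[of "1 - \<gamma>" H] assms(2-4) by (intro mult_left_mono) auto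
  finally show ?thesis by (simp add: ac_simps)
qed

lemma noise_measurable [measurable]: "(\<lambda>\<omega>. noise \<omega> s b) \<in> borel_measurable (Pi\<^sub>M UNIV (\<lambda>_. vecM))"
proof (cases "s < 0")
  case False
  have "(\<lambda>\<omega>::nat \<Rightarrow> vecr. \<omega> (nat s)) \<in> measurable (Pi\<^sub>M UNIV (\<lambda>_. vecM)) vecM" by measurable
  moreover have "(\<lambda>x::vecr. x b) \<in> borel_measurable vecM" unfolding vecM_def by measurable
  ultimately show ?thesis using False unfolding noise_def by (simp add: measurable_compose)
qed (simp add: noise_def)

lemma xtil_measurable [measurable]:
  "(\<lambda>\<omega>. xtil n m H AK B M t \<omega> r) \<in> borel_measurable (Pi\<^sub>M UNIV (\<lambda>_. vecM))"
  unfolding xtil_def by measurable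

lemma util_measurable [measurable]:
  "(\<lambda>\<omega>. util n m H AK B K M t \<omega> r) \<in> borel_measurable (Pi\<^sub>M UNIV (\<lambda>_. vecM))"
  unfolding util_def by measurable

text \<open>Interleaving the coordinates of \<open>x\<close> and \<open>u\<close> into one sequence reduces measurability of the
  cost along the trajectory to the continuity of the cost on the product space.\<close>

lemma cost_trajectory_measurable:
  assumes "cost_model n m G c"
  shows "(\<lambda>\<omega>. c t' (xtil n m H AK B M t \<omega>) (util n m H AK B K M t \<omega>)) \<in> borel_measurable (Pi\<^sub>M UNIV (\<lambda>_. vecM))"
proof -
  define Z where "Z = (\<lambda>\<omega> j. if even j then xtil n m H AK B M t \<omega> (j div 2) else util n m H AK B K M t \<omega> (j div 2))"
  have "Z \<in> measurable (Pi\<^sub>M UNIV (\<lambda>_. vecM)) (Pi\<^sub>M UNIV (\<lambda>_. (borel :: real measure)))"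
    unfolding Z_def by (rule measurable_PiM_single') auto
  from measurable_compose[OF this cost_model_measurable[OF assms, of t']]
  have "(\<lambda>\<omega>. c t' (\<lambda>i. Z \<omega> (2*i)) (\<lambda>j. Z \<omega> (2*j+1))) \<in> borel_measurable (Pi\<^sub>M UNIV (\<lambda>_. vecM))" .
  moreover have "(\<lambda>i. Z \<omega> (2*i)) = xtil n m H AK B M t \<omega>" "(\<lambda>j. Z \<omega> (2*j+1)) = util n m H AK B K M t \<omega>" for \<omega>
    unfolding Z_def by auto
  ultimately show ?thesis by simp
qed

locale closed_loop_setting =
  fixes n m H :: nat and AK B K :: matr and \<kappa> \<gamma> \<kappa>B wbar G :: real
    and c :: "nat \<Rightarrow> vecr \<Rightarrow> vecr \<Rightarrow> real" and P :: "(nat \<Rightarrow> vecr) measure"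
  assumes AK_pow: "\<And>j. op_bound n n (mpow n AK j) (\<kappa>^2 * (1 - \<gamma>)^j)"
    and B_bound: "op_bound n m B \<kappa>B" and K_bound: "op_bound m n K \<kappa>"
    and \<kappa>_ge_1: "1 \<le> \<kappa>" and \<kappa>B_ge_1: "1 \<le> \<kappa>B" and \<gamma>_pos: "0 < \<gamma>" and \<gamma>_less_1: "\<gamma> < 1"
    and wbar_pos: "0 < wbar" and G_pos: "0 < G"
    and cost: "cost_model n m G c" and noise: "noise_model n wbar P"
begin

definition response_gain :: real where
  "response_gain = \<kappa>^2 * \<kappa>B * sqrt (real n) * wbar / \<gamma>"

definition state_bound :: "real \<Rightarrow> real" where
  "state_bound \<sigma> = 2 * \<kappa> * response_gain * (1 + \<sigma>)"

lemma response_gain_nonneg: "0 \<le> response_gain"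
  unfolding response_gain_def using \<kappa>B_ge_1 \<gamma>_pos wbar_pos by simp

lemma noise_bound_le_response_gain: "sqrt (real n) * wbar \<le> response_gain"
proof -
  have "1 \<le> \<kappa>^2" using \<kappa>_ge_1 by (rule one_le_power)
  then have "1 \<le> \<kappa>^2 * \<kappa>B" using mult_mono[of 1 "\<kappa>^2" 1 \<kappa>B] \<kappa>B_ge_1 by simp
  moreover have "\<kappa>^2 * \<kappa>B \<le> \<kappa>^2 * \<kappa>B / \<gamma>"
    using \<open>1 \<le> \<kappa>^2 * \<kappa>B\<close> \<gamma>_pos \<gamma>_less_1 by (simp add: le_divide_eq mult_left_le)
  ultimately have "sqrt (real n) * wbar * 1 \<le> sqrt (real n) * wbar * (\<kappa>^2 * \<kappa>B / \<gamma>)"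
    using wbar_pos by (intro mult_left_mono) auto
  then show ?thesis unfolding response_gain_def by (simp add: ac_simps)
qed

lemma state_bound_mono: "0 \<le> \<sigma> \<Longrightarrow> \<sigma> \<le> \<sigma>' \<Longrightarrow> state_bound \<sigma> \<le> state_bound \<sigma>'"
  unfolding state_bound_def using \<kappa>_ge_1 response_gain_nonneg by (intro mult_left_mono) auto

lemma state_bound_nonneg: "0 \<le> \<sigma> \<Longrightarrow> 0 \<le> state_bound \<sigma>"
  unfolding state_bound_def using \<kappa>_ge_1 response_gain_nonneg by simp

context
  fixes \<omega> :: "nat \<Rightarrow> vecr"
  assumes bounded: "\<forall>s b. b < n \<longrightarrow> \<bar>noise \<omega> s b\<bar> \<le> wbar"
begin

lemma noise_norm_le: "vnorm2 n (noise \<omega> s) \<le> sqrt (real n) * wbar"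
  using bounded wbar_pos by (intro vnorm2_le_sqrt_dim) auto

lemma x_free_norm_le: "vnorm2 n (x_free n H AK t \<omega>) \<le> response_gain"
proof -
  have "vnorm2 n (x_free n H AK t \<omega>)
      \<le> (\<Sum>k\<in>{1..2*H}. if k \<le> H then vnorm2 n (mvmul n (mpow n AK (k - 1)) (noise \<omega> (t - int k))) else 0)"
  proof -
    have "x_free n H AK t \<omega>
        = (\<lambda>r. \<Sum>k\<in>{1..2*H}. if k \<le> H then mvmul n (mpow n AK (k - 1)) (noise \<omega> (t - int k)) r else 0)"
      unfolding x_free_def Phix_free_def mvmul_if by (simp add: if_distrib[of "\<lambda>f. f _"] cong: if_cong)
    then show ?thesis by (simp add: vnorm2_sum_if_le)
  qed
  also have "\<dots> \<le> (\<Sum>k\<in>{1..2*H}. if k \<le> H then \<kappa>^2 * (sqrt (real n) * wbar) * (1 - \<gamma>)^(k - 1) else 0)"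
  proof (intro sum_mono)
    fix k
    have "vnorm2 n (mvmul n (mpow n AK (k - 1)) (noise \<omega> (t - int k)))
        \<le> \<kappa>^2 * (1 - \<gamma>)^(k - 1) * vnorm2 n (noise \<omega> (t - int k))"
      by (rule op_boundD[OF AK_pow])
    also have "\<dots> \<le> \<kappa>^2 * (1 - \<gamma>)^(k - 1) * (sqrt (real n) * wbar)"
      using noise_norm_le \<gamma>_less_1 by (intro mult_left_mono) auto
    finally show "(if k \<le> H then vnorm2 n (mvmul n (mpow n AK (k - 1)) (noise \<omega> (t - int k))) else 0)
        \<le> (if k \<le> H then \<kappa>^2 * (sqrt (real n) * wbar) * (1 - \<gamma>)^(k - 1) else 0)"
      by (simp add: ac_simps)
  qed
  also have "\<dots> = \<kappa>^2 * (sqrt (real n) * wbar) * (\<Sum>k\<in>{1..H}. (1 - \<gamma>)^(k - 1))"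
    unfolding sum_if_le_eq_sum by (simp add: sum_distrib_left)
  also have "\<dots> \<le> \<kappa>^2 * (sqrt (real n) * wbar) * (1 / \<gamma>)"
    using geometric_sum_le[of "1 - \<gamma>" H] \<gamma>_pos \<gamma>_less_1 wbar_pos by (intro mult_left_mono) auto
  also have "\<dots> = response_gain / \<kappa>B" unfolding response_gain_def using \<kappa>B_ge_1 by simp
  also have "\<dots> \<le> response_gain"
    using mult_left_mono[OF \<kappa>B_ge_1 response_gain_nonneg] \<kappa>B_ge_1 by (simp add: divide_le_eq)
  finally show ?thesis .
qed

lemma Phix_param_noise_norm_le:
  "vnorm2 n (mvmul n (Phix_param n m H AK B (\<lambda>_. V) t k) (noise \<omega> (t - int k)))
    \<le> (\<Sum>i\<in>{1..H}. if i < k \<and> k - i \<le> H then response_gain * \<gamma> * (1 - \<gamma>)^(i - 1) * frob_norm m n (V (k - i)) else 0)"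
proof -
  have "vnorm2 n (mvmul n (Phix_param n m H AK B (\<lambda>_. V) t k) (noise \<omega> (t - int k))) \<le> (\<Sum>i\<in>{1..H}.
      if i < k \<and> k - i \<le> H then \<kappa>^2 * (1 - \<gamma>)^(i - 1) * \<kappa>B * vnorm2 m (mvmul n (V (k - i)) (noise \<omega> (t - int k))) else 0)"
    using AK_pow B_bound \<kappa>B_ge_1 \<gamma>_less_1 by (intro mvmul_Phix_param_norm_le) auto
  also have "\<dots> \<le> (\<Sum>i\<in>{1..H}. if i < k \<and> k - i \<le> H then response_gain * \<gamma> * (1 - \<gamma>)^(i - 1) * frob_norm m n (V (k - i)) else 0)"
  proof (intro sum_mono)
    fix i
    have "vnorm2 m (mvmul n (V (k - i)) (noise \<omega> (t - int k))) \<le> frob_norm m n (V (k - i)) * (sqrt (real n) * wbar)"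
      using mvmul_norm_le_frob_norm noise_norm_le by (meson mult_left_mono order_trans frob_norm_nonneg)
    then have "\<kappa>^2 * (1 - \<gamma>)^(i - 1) * \<kappa>B * vnorm2 m (mvmul n (V (k - i)) (noise \<omega> (t - int k)))
        \<le> \<kappa>^2 * (1 - \<gamma>)^(i - 1) * \<kappa>B * (frob_norm m n (V (k - i)) * (sqrt (real n) * wbar))"
      using \<kappa>B_ge_1 \<gamma>_less_1 by (intro mult_left_mono) auto
    then show "(if i < k \<and> k - i \<le> H
          then \<kappa>^2 * (1 - \<gamma>)^(i - 1) * \<kappa>B * vnorm2 m (mvmul n (V (k - i)) (noise \<omega> (t - int k))) else 0)
        \<le> (if i < k \<and> k - i \<le> H then response_gain * \<gamma> * (1 - \<gamma>)^(i - 1) * frob_norm m n (V (k - i)) else 0)"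
      unfolding response_gain_def using \<gamma>_pos by (simp add: ac_simps)
  qed
  finally show ?thesis .
qed

lemma x_param_norm_le: "vnorm2 n (x_param n m H AK B V t \<omega>) \<le> response_gain * block_norm_sum H m n V"
proof -
  let ?F = "\<lambda>k. vnorm2 n (mvmul n (Phix_param n m H AK B (\<lambda>_. V) t k) (noise \<omega> (t - int k)))"
  have "vnorm2 n (x_param n m H AK B V t \<omega>) \<le> (\<Sum>k\<in>{1..2*H}. ?F k)"
    unfolding x_param_def by (rule vnorm2_sum_le) simp
  also have "\<dots> \<le> (\<Sum>k\<in>{1..2*H}. \<Sum>i\<in>{1..H}.
      if i < k \<and> k - i \<le> H then response_gain * \<gamma> * (1 - \<gamma>)^(i - 1) * frob_norm m n (V (k - i)) else 0)"
    by (intro sum_mono Phix_param_noise_norm_le)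
  also have "\<dots> = (\<Sum>i\<in>{1..H}. response_gain * \<gamma> * (1 - \<gamma>)^(i - 1)
      * (\<Sum>k\<in>{1..2*H}. if i < k \<and> k - i \<le> H then frob_norm m n (V (k - i)) else 0))"
    by (subst sum.swap) (simp add: sum_distrib_left if_distrib[of "\<lambda>x. _ * x"] cong: if_cong)
  also have "\<dots> \<le> (\<Sum>i\<in>{1..H}. response_gain * \<gamma> * (1 - \<gamma>)^(i - 1) * block_norm_sum H m n V)"
    unfolding block_norm_sum_def using response_gain_nonneg \<gamma>_pos \<gamma>_less_1
    by (intro sum_mono mult_left_mono sum_shifted_le) auto
  also have "\<dots> = response_gain * \<gamma> * block_norm_sum H m n V * (\<Sum>i\<in>{1..H}. (1 - \<gamma>)^(i - 1))"
    by (simp add: sum_distrib_left ac_simps)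
  also have "\<dots> \<le> response_gain * \<gamma> * block_norm_sum H m n V * (1 / \<gamma>)"
    using geometric_sum_le[of "1 - \<gamma>" H] response_gain_nonneg \<gamma>_pos \<gamma>_less_1 by (intro mult_left_mono) auto
  finally show ?thesis using \<gamma>_pos by simp
qed

lemma u_feedforward_norm_le: "vnorm2 m (u_feedforward n H V t \<omega>) \<le> response_gain * block_norm_sum H m n V"
proof -
  have "vnorm2 m (u_feedforward n H V t \<omega>)
      \<le> (\<Sum>k\<in>{1..2*H}. if k \<le> H then vnorm2 m (mvmul n (V k) (noise \<omega> (t - int k))) else 0)"
    unfolding u_feedforward_def by (rule vnorm2_sum_if_le) simp
  also have "\<dots> \<le> (\<Sum>k\<in>{1..2*H}. if k \<le> H then frob_norm m n (V k) * response_gain else 0)"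
  proof (intro sum_mono)
    fix k
    have "vnorm2 m (mvmul n (V k) (noise \<omega> (t - int k))) \<le> frob_norm m n (V k) * vnorm2 n (noise \<omega> (t - int k))"
      by (rule mvmul_norm_le_frob_norm)
    also have "\<dots> \<le> frob_norm m n (V k) * response_gain"
      using noise_norm_le noise_bound_le_response_gain by (intro mult_left_mono) (auto intro: order_trans)
    finally show "(if k \<le> H then vnorm2 m (mvmul n (V k) (noise \<omega> (t - int k))) else 0)
        \<le> (if k \<le> H then frob_norm m n (V k) * response_gain else 0)" by simp
  qed
  also have "\<dots> = response_gain * block_norm_sum H m n V"
    unfolding sum_if_le_eq_sum block_norm_sum_def by (simp add: sum_distrib_left ac_simps)
  finally show ?thesis .
qed

lemma xtil_norm_le: "vnorm2 n (xtil n m H AK B M t \<omega>) \<le> response_gain * (1 + block_norm_sum H m n M)"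
  using vnorm2_triangle[of n "x_free n H AK t \<omega>" "x_param n m H AK B M t \<omega>"]
    x_free_norm_le[of t] x_param_norm_le[of M t]
  unfolding xtil_eq distrib_left by linarith

lemma util_norm_le: "vnorm2 m (util n m H AK B K M t \<omega>) \<le> state_bound (block_norm_sum H m n M)"
proof -
  let ?S = "block_norm_sum H m n M"
  have "0 \<le> response_gain * ?S" using response_gain_nonneg by simp
  then have "vnorm2 m (u_feedforward n H M t \<omega>) \<le> response_gain * (1 + ?S)"
    using u_feedforward_norm_le[of M t] response_gain_nonneg by (simp add: distrib_left)
  moreover have "vnorm2 m (mvmul n K (xtil n m H AK B M t \<omega>)) \<le> \<kappa> * (response_gain * (1 + ?S))"
    using op_boundD[OF K_bound] xtil_norm_le \<kappa>_ge_1 by (meson mult_left_mono order_trans zero_le_one)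
  ultimately have "vnorm2 m (util n m H AK B K M t \<omega>) \<le> (1 + \<kappa>) * (response_gain * (1 + ?S))"
    using vnorm2_diff_le[of m "u_feedforward n H M t \<omega>" "mvmul n K (xtil n m H AK B M t \<omega>)"]
    unfolding util_eq distrib_right by linarith
  also have "\<dots> \<le> state_bound ?S"
    unfolding state_bound_def using \<kappa>_ge_1 response_gain_nonneg
    by (simp add: mult_right_mono mult.assoc[symmetric] del: mult.assoc)
  finally show ?thesis .
qed

lemma xtil_norm_le_state_bound: "vnorm2 n (xtil n m H AK B M t \<omega>) \<le> state_bound (block_norm_sum H m n M)"
proof -
  have "0 \<le> response_gain * (1 + block_norm_sum H m n M)"
    using response_gain_nonneg block_norm_sum_nonneg[of H m n M] by simp
  then have "response_gain * (1 + block_norm_sum H m n M) \<le> 2 * \<kappa> * (response_gain * (1 + block_norm_sum H m n M))"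
    using \<kappa>_ge_1 by (simp add: mult_le_cancel_right1)
  then show ?thesis using xtil_norm_le[of M t] unfolding state_bound_def by (simp add: mult.assoc)
qed

lemma util_perturb_norm_le:
  "vnorm2 m (\<lambda>a. u_feedforward n H V t \<omega> a - mvmul n K (x_param n m H AK B V t \<omega>) a)
    \<le> 2 * \<kappa> * response_gain * block_norm_sum H m n V"
proof -
  let ?S = "block_norm_sum H m n V"
  have "vnorm2 m (mvmul n K (x_param n m H AK B V t \<omega>)) \<le> \<kappa> * (response_gain * ?S)"
    using op_boundD[OF K_bound] x_param_norm_le \<kappa>_ge_1 by (meson mult_left_mono order_trans zero_le_one)
  then have "vnorm2 m (\<lambda>a. u_feedforward n H V t \<omega> a - mvmul n K (x_param n m H AK B V t \<omega>) a)
      \<le> (1 + \<kappa>) * (response_gain * ?S)"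
    using vnorm2_diff_le[of m "u_feedforward n H V t \<omega>" "mvmul n K (x_param n m H AK B V t \<omega>)"]
      u_feedforward_norm_le[of V t]
    unfolding distrib_right by linarith
  also have "\<dots> \<le> 2 * \<kappa> * response_gain * ?S"
    using \<kappa>_ge_1 response_gain_nonneg by (simp add: mult_right_mono mult.assoc[symmetric] del: mult.assoc)
  finally show ?thesis .
qed

lemma cost_perturb_le:
  "\<bar>c t (xtil n m H AK B (\<lambda>i a b. M i a b + s * V i a b) t' \<omega>) (util n m H AK B K (\<lambda>i a b. M i a b + s * V i a b) t' \<omega>)
     - c t (xtil n m H AK B M t' \<omega>) (util n m H AK B K M t' \<omega>)\<bar>
   \<le> G * state_bound (block_norm_sum H m n M + \<bar>s\<bar> * block_norm_sum H m n V)
       * (3 * \<kappa> * response_gain * \<bar>s\<bar> * block_norm_sum H m n V)"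
proof -
  let ?M' = "\<lambda>i a b. M i a b + s * V i a b"
  let ?S = "block_norm_sum H m n" and ?b = "state_bound (block_norm_sum H m n M + \<bar>s\<bar> * block_norm_sum H m n V)"
  have "state_bound (?S ?M') \<le> ?b" "state_bound (?S M) \<le> ?b"
    using block_norm_sum_perturb_le[of H m n M s V] by (auto intro: state_bound_mono)
  then have bounds: "vnorm2 n (xtil n m H AK B ?M' t' \<omega>) \<le> ?b" "vnorm2 m (util n m H AK B K ?M' t' \<omega>) \<le> ?b"
      "vnorm2 n (xtil n m H AK B M t' \<omega>) \<le> ?b" "vnorm2 m (util n m H AK B K M t' \<omega>) \<le> ?b"
    using xtil_norm_le_state_bound util_norm_le by (meson order_trans)+
  have "vnorm2 n (\<lambda>r. xtil n m H AK B ?M' t' \<omega> r - xtil n m H AK B M t' \<omega> r) \<le> \<bar>s\<bar> * (response_gain * ?S V)"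
    unfolding xtil_perturb by (simp add: vnorm2_scale x_param_norm_le mult_left_mono)
  moreover have "vnorm2 m (\<lambda>a. util n m H AK B K ?M' t' \<omega> a - util n m H AK B K M t' \<omega> a) \<le> \<bar>s\<bar> * (2 * \<kappa> * response_gain * ?S V)"
    unfolding util_perturb by (simp add: vnorm2_scale util_perturb_norm_le mult_left_mono)
  moreover have "\<bar>s\<bar> * (response_gain * ?S V) + \<bar>s\<bar> * (2 * \<kappa> * response_gain * ?S V) \<le> 3 * \<kappa> * response_gain * \<bar>s\<bar> * ?S V"
    using \<kappa>_ge_1 response_gain_nonneg mult_right_mono[OF \<kappa>_ge_1, of "\<bar>s\<bar> * response_gain * ?S V"] by (simp add: algebra_simps)
  ultimately show ?thesis
    using cost_model_lipschitz[OF cost bounds, of t] G_pos state_bound_nonneg[of "?S M + \<bar>s\<bar> * ?S V"]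
    by (smt (verit) mult_left_mono mult_nonneg_nonneg block_norm_sum_nonneg abs_ge_zero)
qed

end

section \<open>The expected cost and its gradients\<close>

lemma prob_space_P: "prob_space P"
  using noise unfolding noise_model_def by blast

lemma noise_bounded_AE: "AE \<omega> in P. \<forall>s b. b < n \<longrightarrow> \<bar>noise \<omega> s b\<bar> \<le> wbar"
proof -
  have "AE \<omega> in P. \<forall>t. \<forall>b<n. \<bar>\<omega> t b\<bar> \<le> wbar" using noise unfolding noise_model_def by blast
  then show ?thesis
    by (rule AE_mp) (intro AE_I2 impI allI, auto simp: noise_def less_imp_le[OF wbar_pos])
qed

lemma cost_trajectory_borel_measurable:
  "(\<lambda>\<omega>. c t (xtil n m H AK B M (int t) \<omega>) (util n m H AK B K M (int t) \<omega>)) \<in> borel_measurable P"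
proof -
  have "sets P = sets (Pi\<^sub>M UNIV (\<lambda>_. vecM))" using noise unfolding noise_model_def by blast
  then show ?thesis using cost_trajectory_measurable[OF cost] measurable_cong_sets by blast
qed

lemma cost_trajectory_integrable:
  "integrable P (\<lambda>\<omega>. c t (xtil n m H AK B M (int t) \<omega>) (util n m H AK B K M (int t) \<omega>))"
proof -
  interpret prob_space P by (rule prob_space_P)
  define b where "b = state_bound (block_norm_sum H m n M)"
  have "0 \<le> b" unfolding b_def by (simp add: state_bound_nonneg)
  have "AE \<omega> in P. norm (c t (xtil n m H AK B M (int t) \<omega>) (util n m H AK B K M (int t) \<omega>))
      \<le> \<bar>c t (\<lambda>_. 0) (\<lambda>_. 0)\<bar> + G * b * (b + b)"
    using noise_bounded_AE
  proof (rule AE_mp, intro AE_I2 impI)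
    fix \<omega> assume bounded: "\<forall>s b. b < n \<longrightarrow> \<bar>noise \<omega> s b\<bar> \<le> wbar"
    let ?x = "xtil n m H AK B M (int t) \<omega>" and ?u = "util n m H AK B K M (int t) \<omega>"
    have x: "vnorm2 n ?x \<le> b" and u: "vnorm2 m ?u \<le> b"
      unfolding b_def using xtil_norm_le_state_bound[OF bounded] util_norm_le[OF bounded] by auto
    have "\<bar>c t ?x ?u - c t (\<lambda>_. 0) (\<lambda>_. 0)\<bar> \<le> G * b * (vnorm2 n (\<lambda>i. ?x i - 0) + vnorm2 m (\<lambda>j. ?u j - 0))"
      using x u \<open>0 \<le> b\<close> by (intro cost_model_lipschitz[OF cost]) simp_all
    also have "\<dots> \<le> G * b * (b + b)"
      using x u \<open>0 \<le> b\<close> G_pos by (intro mult_left_mono) simp_all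
    finally have "\<bar>c t ?x ?u - c t (\<lambda>_. 0) (\<lambda>_. 0)\<bar> \<le> G * b * (b + b)" .
    then show "norm (c t (xtil n m H AK B M (int t) \<omega>) (util n m H AK B K M (int t) \<omega>))
        \<le> \<bar>c t (\<lambda>_. 0) (\<lambda>_. 0)\<bar> + G * b * (b + b)" by simp
  qed
  with cost_trajectory_borel_measurable show ?thesis by (rule integrable_const_bound[rotated])
qed


lemma fring_convex: "convex_param (fring P c n m H AK B K t)"
  unfolding convex_param_def
proof (intro allI impI)
  fix X Y :: param and \<theta> :: real
  assume \<theta>: "0 \<le> \<theta> \<and> \<theta> \<le> 1"
  let ?f = "\<lambda>M \<omega>. c t (xtil n m H AK B M (int t) \<omega>) (util n m H AK B K M (int t) \<omega>)"
  have "?f (\<lambda>i a b. \<theta> * X i a b + (1 - \<theta>) * Y i a b) \<omega> \<le> \<theta> * ?f X \<omega> + (1 - \<theta>) * ?f Y \<omega>" for \<omega>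
    using cost_model_jointly_convex[OF cost, of t] \<theta>
    unfolding xtil_convex_comb[of \<theta> "1 - \<theta>", simplified] util_convex_comb[of \<theta> "1 - \<theta>", simplified]
      jointly_convex_def by blast
  then have "(\<integral>\<omega>. ?f (\<lambda>i a b. \<theta> * X i a b + (1 - \<theta>) * Y i a b) \<omega> \<partial>P) \<le> (\<integral>\<omega>. \<theta> * ?f X \<omega> + (1 - \<theta>) * ?f Y \<omega> \<partial>P)"
    by (intro integral_mono cost_trajectory_integrable Bochner_Integration.integrable_add integrable_mult_right)
  also have "\<dots> = \<theta> * (\<integral>\<omega>. ?f X \<omega> \<partial>P) + (1 - \<theta>) * (\<integral>\<omega>. ?f Y \<omega> \<partial>P)"
    by (simp add: cost_trajectory_integrable)
  finally show "fring P c n m H AK B K t (\<lambda>i a b. \<theta> * X i a b + (1 - \<theta>) * Y i a b)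
      \<le> \<theta> * fring P c n m H AK B K t X + (1 - \<theta>) * fring P c n m H AK B K t Y"
    unfolding fring_def .
qed

lemma fring_perturb_le:
  "\<bar>fring P c n m H AK B K t (\<lambda>i a b. M i a b + s * V i a b) - fring P c n m H AK B K t M\<bar>
    \<le> G * state_bound (block_norm_sum H m n M + \<bar>s\<bar> * block_norm_sum H m n V)
        * (3 * \<kappa> * response_gain * \<bar>s\<bar> * block_norm_sum H m n V)"
    (is "\<bar>_\<bar> \<le> ?C")
proof -
  interpret prob_space P by (rule prob_space_P)
  let ?f = "\<lambda>M \<omega>. c t (xtil n m H AK B M (int t) \<omega>) (util n m H AK B K M (int t) \<omega>)"
  let ?M' = "\<lambda>i a b. M i a b + s * V i a b"
  have "\<bar>fring P c n m H AK B K t ?M' - fring P c n m H AK B K t M\<bar> = \<bar>\<integral>\<omega>. ?f ?M' \<omega> - ?f M \<omega> \<partial>P\<bar>"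
    unfolding fring_def using cost_trajectory_integrable by simp
  also have "\<dots> \<le> (\<integral>\<omega>. \<bar>?f ?M' \<omega> - ?f M \<omega>\<bar> \<partial>P)" by (rule integral_abs_bound)
  also have "\<dots> \<le> (\<integral>\<omega>. ?C \<partial>P)"
  proof (rule integral_mono_AE)
    show "AE \<omega> in P. \<bar>?f ?M' \<omega> - ?f M \<omega>\<bar> \<le> ?C"
      using noise_bounded_AE by eventually_elim (rule cost_perturb_le)
  qed (intro integrable_abs Bochner_Integration.integrable_diff cost_trajectory_integrable, simp)
  also have "\<dots> = ?C" by (simp add: prob_space)
  finally show ?thesis .
qed


lemma growth_constant_le:
  assumes "1 \<le> n" "1 \<le> m" "1 \<le> H"
  shows "G * state_bound (2 * sqrt (real n) * \<kappa>^3 * sqrt (real m) / \<gamma> + sqrt (real H))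
      * (3 * \<kappa> * response_gain * sqrt (real H))
    \<le> 24 * G * \<kappa>^5 * response_gain^2 * sqrt (real n) * sqrt (real m) * real H / \<gamma>"
proof -
  define X where "X = sqrt (real n) * \<kappa>^3 * sqrt (real m) / \<gamma>"
  have "1 \<le> sqrt (real H)" using assms(3) by simp
  have "1 \<le> sqrt (real n) * \<kappa>^3" using assms(1) \<kappa>_ge_1 mult_mono[of 1 "sqrt (real n)" 1 "\<kappa>^3"] by simp
  then have "1 \<le> sqrt (real n) * \<kappa>^3 * sqrt (real m)"
    using assms(2) mult_mono[of 1 "sqrt (real n) * \<kappa>^3" 1 "sqrt (real m)"] by simp
  then have "1 \<le> X" unfolding X_def using \<gamma>_pos \<gamma>_less_1 by (simp add: le_divide_eq)
  have "1 \<le> X * sqrt (real H)" "X \<le> X * sqrt (real H)" "sqrt (real H) \<le> X * sqrt (real H)"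
    using \<open>1 \<le> X\<close> \<open>1 \<le> sqrt (real H)\<close> mult_mono[of 1 X 1 "sqrt (real H)"]
    by (simp_all add: mult_le_cancel_left1 mult_le_cancel_right1)
  then have "1 + 2 * X + sqrt (real H) \<le> 4 * X * sqrt (real H)" by linarith
  then have "G * state_bound (2 * X + sqrt (real H)) * (3 * \<kappa> * response_gain * sqrt (real H))
      \<le> G * (2 * \<kappa> * response_gain * (4 * X * sqrt (real H))) * (3 * \<kappa> * response_gain * sqrt (real H))"
    unfolding state_bound_def using G_pos \<kappa>_ge_1 response_gain_nonneg
    by (intro mult_right_mono mult_left_mono) (auto simp: add.assoc)
  also have "\<dots> = 24 * G * \<kappa>^5 * response_gain^2 * sqrt (real n) * sqrt (real m) * real H / \<gamma>"
    using real_sqrt_mult_self[of "real H"] unfolding X_def by (simp add: power2_eq_square power_numeral_reduce mult_ac)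
  finally show ?thesis unfolding X_def by (simp add: mult.assoc)
qed

lemma fring_pgrad_le:
  assumes "M \<in> Mset n m H \<kappa> \<gamma>" and pg: "pgrad H m n (fring P c n m H AK B K t) M g"
    and "1 \<le> n" "1 \<le> m"
  shows "param_norm H m n g \<le> 24 * G * \<kappa>^5 * response_gain^2 * sqrt (real n) * sqrt (real m) * real H / \<gamma>"
proof (cases "H = 0")
  case True
  then show ?thesis using G_pos \<kappa>_ge_1 \<gamma>_pos by (simp add: param_norm_def)
next
  case False
  define \<sigma> where "\<sigma> = 2 * sqrt (real n) * \<kappa>^3 * sqrt (real m) / \<gamma>"
  define L where "L = G * state_bound (\<sigma> + sqrt (real H)) * (3 * \<kappa> * response_gain * sqrt (real H))"
  have M: "block_norm_sum H m n M \<le> \<sigma>"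
    unfolding \<sigma>_def using block_norm_sum_Mset_le[OF assms(1) \<gamma>_pos \<gamma>_less_1] \<kappa>_ge_1 by simp
  have "0 \<le> \<sigma>" unfolding \<sigma>_def using \<kappa>_ge_1 \<gamma>_pos by simp
  have "param_norm H m n g \<le> L"
  proof (rule convex_param_pgrad_le[OF fring_convex pg])
    show "0 \<le> L" unfolding L_def using G_pos \<kappa>_ge_1 response_gain_nonneg \<open>0 \<le> \<sigma>\<close> by (simp add: state_bound_nonneg)
  next
    fix s assume "0 < s" and small: "s * param_norm H m n g \<le> 1"
    let ?S = "block_norm_sum H m n g"
    have Sg: "?S \<le> sqrt (real H) * param_norm H m n g" by (rule block_norm_sum_le_param_norm)
    have "s * ?S \<le> s * (sqrt (real H) * param_norm H m n g)" using Sg \<open>0 < s\<close> by simp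
    also have "\<dots> \<le> sqrt (real H)"
      using mult_left_le[OF small, of "sqrt (real H)"] by (simp add: ac_simps)
    finally have "s * ?S \<le> sqrt (real H)" .
    then have sb: "state_bound (block_norm_sum H m n M + \<bar>s\<bar> * ?S) \<le> state_bound (\<sigma> + sqrt (real H))"
      using M \<open>0 < s\<close> by (intro state_bound_mono) auto
    have inc: "3 * \<kappa> * response_gain * \<bar>s\<bar> * ?S \<le> s * (3 * \<kappa> * response_gain * sqrt (real H) * param_norm H m n g)"
      using Sg \<open>0 < s\<close> \<kappa>_ge_1 response_gain_nonneg mult_left_mono[OF Sg, of "3 * \<kappa> * response_gain * s"] by (simp add: ac_simps)
    have "state_bound (block_norm_sum H m n M + \<bar>s\<bar> * ?S) * (3 * \<kappa> * response_gain * \<bar>s\<bar> * ?S)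
        \<le> state_bound (\<sigma> + sqrt (real H)) * (s * (3 * \<kappa> * response_gain * sqrt (real H) * param_norm H m n g))"
      using mult_mono[OF sb inc] \<kappa>_ge_1 response_gain_nonneg \<open>0 \<le> \<sigma>\<close> by (simp add: state_bound_nonneg)
    then have "G * state_bound (block_norm_sum H m n M + \<bar>s\<bar> * ?S) * (3 * \<kappa> * response_gain * \<bar>s\<bar> * ?S)
        \<le> s * L * param_norm H m n g"
      unfolding L_def using mult_left_mono G_pos by (fastforce simp: mult_ac)
    then show "fring P c n m H AK B K t (\<lambda>i a b. M i a b + s * g i a b) - fring P c n m H AK B K t M
        \<le> s * L * param_norm H m n g"
      using fring_perturb_le[of t M s g] by linarith
  qed
  also have "L \<le> 24 * G * \<kappa>^5 * response_gain^2 * sqrt (real n) * sqrt (real m) * real H / \<gamma>"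
    unfolding L_def \<sigma>_def using assms(3,4) False by (intro growth_constant_le) auto
  finally show ?thesis .
qed


section \<open>Deviation of the constraint functions along the trajectory\<close>

lemma Phix_param_columns_le:
  assumes "0 \<le> \<delta>" and hist: "\<And>i. i \<in> {1..H} \<Longrightarrow> param_norm H m n (D (\<tau> - int i)) \<le> \<delta> * real i"
  shows "(\<Sum>b<n. vnorm2 n (mvmul n (Phix_param n m H AK B D \<tau> k) (unit_vec b)))
    \<le> \<kappa>^2 * \<kappa>B * sqrt (real n) * \<delta> * (\<Sum>i\<in>{1..H}. real i * (1 - \<gamma>)^(i - 1))"
proof -
  let ?col = "\<lambda>i. \<Sum>b<n. vnorm2 m (mvmul n (D (\<tau> - int i) (k - i)) (unit_vec b))"
  have "(\<Sum>b<n. vnorm2 n (mvmul n (Phix_param n m H AK B D \<tau> k) (unit_vec b)))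
      \<le> (\<Sum>b<n. \<Sum>i\<in>{1..H}. if i < k \<and> k - i \<le> H
          then \<kappa>^2 * (1 - \<gamma>)^(i - 1) * \<kappa>B * vnorm2 m (mvmul n (D (\<tau> - int i) (k - i)) (unit_vec b)) else 0)"
    using AK_pow B_bound \<kappa>B_ge_1 \<gamma>_less_1 by (intro sum_mono mvmul_Phix_param_norm_le) auto
  also have "\<dots> = (\<Sum>i\<in>{1..H}. if i < k \<and> k - i \<le> H then \<kappa>^2 * (1 - \<gamma>)^(i - 1) * \<kappa>B * ?col i else 0)"
    by (subst sum.swap) (auto simp: sum_distrib_left intro!: sum.cong)
  also have "\<dots> \<le> (\<Sum>i\<in>{1..H}. \<kappa>^2 * \<kappa>B * sqrt (real n) * \<delta> * (real i * (1 - \<gamma>)^(i - 1)))"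
  proof (intro sum_mono)
    fix i assume "i \<in> {1..H}"
    show "(if i < k \<and> k - i \<le> H then \<kappa>^2 * (1 - \<gamma>)^(i - 1) * \<kappa>B * ?col i else 0)
        \<le> \<kappa>^2 * \<kappa>B * sqrt (real n) * \<delta> * (real i * (1 - \<gamma>)^(i - 1))"
    proof (cases "i < k \<and> k - i \<le> H")
      case True
      have "?col i \<le> sqrt (real n) * frob_norm m n (D (\<tau> - int i) (k - i))"
        by (rule sum_column_norms_le_frob_norm)
      also have "\<dots> \<le> sqrt (real n) * (\<delta> * real i)"
        using frob_norm_le_param_norm[of "k - i" H m n "D (\<tau> - int i)"] hist[OF \<open>i \<in> _\<close>] True
        by (intro mult_left_mono) (auto simp: Suc_le_eq)
      finally have "\<kappa>^2 * (1 - \<gamma>)^(i - 1) * \<kappa>B * ?col i \<le> \<kappa>^2 * (1 - \<gamma>)^(i - 1) * \<kappa>B * (sqrt (real n) * (\<delta> * real i))"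
        using \<kappa>B_ge_1 \<gamma>_less_1 by (intro mult_left_mono) auto
      then show ?thesis using True by (simp add: ac_simps)
    qed (use \<kappa>B_ge_1 \<gamma>_less_1 \<open>0 \<le> \<delta>\<close> in auto)
  qed
  finally show ?thesis by (simp add: sum_distrib_left)
qed


lemma Phix_param_columns_total_le:
  assumes "0 \<le> \<delta>" and "\<And>i. i \<in> {1..H} \<Longrightarrow> param_norm H m n (D (\<tau> - int i)) \<le> \<delta> * real i"
  shows "(\<Sum>k\<in>{1..2*H}. \<Sum>b<n. vnorm2 n (mvmul n (Phix_param n m H AK B D \<tau> k) (unit_vec b)))
    \<le> real (2*H) * (\<kappa>^2 * \<kappa>B * sqrt (real n) * \<delta> / \<gamma>^2)"
proof -
  have "(\<Sum>k\<in>{1..2*H}. \<Sum>b<n. vnorm2 n (mvmul n (Phix_param n m H AK B D \<tau> k) (unit_vec b)))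
      \<le> real (2*H) * (\<kappa>^2 * \<kappa>B * sqrt (real n) * \<delta> * (\<Sum>i\<in>{1..H}. real i * (1 - \<gamma>)^(i - 1)))"
    using sum_mono[OF Phix_param_columns_le[OF assms], of "{1..2*H}"] by simp
  also have "\<dots> \<le> real (2*H) * (\<kappa>^2 * \<kappa>B * sqrt (real n) * \<delta> * (1 / \<gamma>^2))"
    using weighted_geometric_sum_le[of "1 - \<gamma>" H] \<gamma>_pos \<gamma>_less_1 \<kappa>B_ge_1 \<open>0 \<le> \<delta>\<close>
    by (intro mult_left_mono) auto
  finally show ?thesis by simp
qed

lemma gx_deviation_le:
  assumes "0 \<le> \<delta>" "j < kx"
    and "\<And>i. i \<in> {1..H} \<Longrightarrow> param_norm H m n (\<lambda>i' a b. M i' a b - hist (\<tau> + 1 - int i) i' a b) \<le> \<delta> * real i"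
  shows "\<bar>gx n m H AK B wbar Dx (\<lambda>_. M) 0 j - gx n m H AK B wbar Dx hist \<tau> j\<bar>
    \<le> wbar * inf_norm kx n Dx * (real (2*H) * (\<kappa>^2 * \<kappa>B * sqrt (real n) * \<delta> / \<gamma>^2))"
proof -
  let ?col = "\<lambda>k b. mvmul n (Phix_param n m H AK B (\<lambda>s i a b. M i a b - hist s i a b) (\<tau> + 1) k) (unit_vec b)"
  let ?row = "\<lambda>hist t k b. \<Sum>l<n. Dx j l * Phix n m H AK B hist t k l b"
  have "(\<Sum>k\<in>{1..2*H}. \<Sum>b<n. \<bar>?row (\<lambda>_. M) 1 k b - ?row hist (\<tau> + 1) k b\<bar>)
      = (\<Sum>k\<in>{1..2*H}. \<Sum>b<n. \<bar>\<Sum>l<n. Dx j l * ?col k b l\<bar>)"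
    by (intro sum.cong refl)
      (simp add: Phix_deviation_column right_diff_distrib[symmetric] sum_subtractf[symmetric])
  then have "\<bar>gx n m H AK B wbar Dx (\<lambda>_. M) 0 j - gx n m H AK B wbar Dx hist \<tau> j\<bar>
      \<le> wbar * (\<Sum>k\<in>{1..2*H}. \<Sum>b<n. \<bar>\<Sum>l<n. Dx j l * ?col k b l\<bar>)"
    using abs_diff_sum_abs_le[of "?row (\<lambda>_. M) 1" n "{1..2*H}" "?row hist (\<tau> + 1)"] wbar_pos
    unfolding gx_def by (simp add: abs_mult right_diff_distrib[symmetric] mult_left_mono)
  also have "\<dots> \<le> wbar * (\<Sum>k\<in>{1..2*H}. \<Sum>b<n. inf_norm kx n Dx * vnorm2 n (?col k b))"
    using wbar_pos
    by (intro mult_left_mono sum_mono order_trans[OF abs_row_inner_le]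
        mult_right_mono row_abs_sum_le_inf_norm \<open>j < kx\<close>) auto
  also have "\<dots> = wbar * inf_norm kx n Dx * (\<Sum>k\<in>{1..2*H}. \<Sum>b<n. vnorm2 n (?col k b))"
    by (simp add: sum_distrib_left mult.assoc)
  also have "\<dots> \<le> wbar * inf_norm kx n Dx * (real (2*H) * (\<kappa>^2 * \<kappa>B * sqrt (real n) * \<delta> / \<gamma>^2))"
    using Phix_param_columns_total_le[OF assms(1), where D="\<lambda>s i a b. M i a b - hist s i a b" and \<tau>="\<tau> + 1"]
      assms(3) wbar_pos inf_norm_nonneg[of kx n Dx]
    by (intro mult_left_mono) auto
  finally show ?thesis .
qed


lemma gu_deviation_le:
  assumes "0 \<le> \<delta>" "j < ku" "hist \<tau> = M"
    and "\<And>i. i \<in> {1..H} \<Longrightarrow> param_norm H m n (\<lambda>i' a b. M i' a b - hist (\<tau> - int i) i' a b) \<le> \<delta> * real i"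
  shows "\<bar>gu n m H AK B K wbar Du (\<lambda>_. M) 0 j - gu n m H AK B K wbar Du hist \<tau> j\<bar>
    \<le> wbar * (\<kappa> * inf_norm ku m Du) * (real (2*H) * (\<kappa>^2 * \<kappa>B * sqrt (real n) * \<delta> / \<gamma>^2))"
proof -
  let ?col = "\<lambda>k b. mvmul n (Phix_param n m H AK B (\<lambda>s i a b. M i a b - hist s i a b) \<tau> k) (unit_vec b)"
  let ?row = "\<lambda>hist t k b. \<Sum>a<m. Du j a * Phiu n m H AK B K hist t k a b"
  have "(\<Sum>k\<in>{1..2*H}. \<Sum>b<n. \<bar>?row (\<lambda>_. M) 0 k b - ?row hist \<tau> k b\<bar>)
      = (\<Sum>k\<in>{1..2*H}. \<Sum>b<n. \<bar>\<Sum>a<m. Du j a * - mvmul n K (?col k b) a\<bar>)"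
    using \<open>hist \<tau> = M\<close> by (intro sum.cong refl)
      (simp add: Phiu_deviation_column right_diff_distrib[symmetric] sum_subtractf[symmetric] del: mult_minus_right)
  then have "\<bar>gu n m H AK B K wbar Du (\<lambda>_. M) 0 j - gu n m H AK B K wbar Du hist \<tau> j\<bar>
      \<le> wbar * (\<Sum>k\<in>{1..2*H}. \<Sum>b<n. \<bar>\<Sum>a<m. Du j a * - mvmul n K (?col k b) a\<bar>)"
    using abs_diff_sum_abs_le[of "?row (\<lambda>_. M) 0" n "{1..2*H}" "?row hist \<tau>"] wbar_pos
    unfolding gu_def by (simp add: abs_mult right_diff_distrib[symmetric] mult_left_mono del: mult_minus_right)
  also have "\<dots> \<le> wbar * (\<Sum>k\<in>{1..2*H}. \<Sum>b<n. inf_norm ku m Du * (\<kappa> * vnorm2 n (?col k b)))"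
  proof (intro mult_left_mono sum_mono)
    fix k b
    have "\<bar>\<Sum>a<m. Du j a * - mvmul n K (?col k b) a\<bar> \<le> (\<Sum>a<m. \<bar>Du j a\<bar>) * vnorm2 m (\<lambda>a. - mvmul n K (?col k b) a)"
      by (rule abs_row_inner_le)
    also have "\<dots> \<le> inf_norm ku m Du * (\<kappa> * vnorm2 n (?col k b))"
      using row_abs_sum_le_inf_norm[OF \<open>j < ku\<close>] op_boundD[OF K_bound] inf_norm_nonneg
      by (intro mult_mono) auto
    finally show "\<bar>\<Sum>a<m. Du j a * - mvmul n K (?col k b) a\<bar> \<le> inf_norm ku m Du * (\<kappa> * vnorm2 n (?col k b))" .
  qed (use wbar_pos in simp)
  also have "\<dots> = wbar * (\<kappa> * inf_norm ku m Du) * (\<Sum>k\<in>{1..2*H}. \<Sum>b<n. vnorm2 n (?col k b))"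
    by (simp add: sum_distrib_left ac_simps)
  also have "\<dots> \<le> wbar * (\<kappa> * inf_norm ku m Du) * (real (2*H) * (\<kappa>^2 * \<kappa>B * sqrt (real n) * \<delta> / \<gamma>^2))"
    using Phix_param_columns_total_le[OF assms(1), where D="\<lambda>s i a b. M i a b - hist s i a b" and \<tau>=\<tau>]
      assms(4) wbar_pos \<kappa>_ge_1 inf_norm_nonneg[of ku m Du]
    by (intro mult_left_mono) auto
  finally show ?thesis .
qed


lemma ogd_bz_constraint_deviation:
  assumes ogd: "ogd_bz (\<lambda>t. fring P c n m H AK B K t) H m n Om \<eta> T Ms"
    and "Om \<subseteq> Mset n m H \<kappa> \<gamma>" "0 < \<eta>" "1 \<le> n" "1 \<le> m" "t \<le> T"
  shows "j < kx \<Longrightarrow> \<bar>gx n m H AK B wbar Dx (\<lambda>_. Ms t) 0 j - gx n m H AK B wbar Dx (histof Ms) (int t) j\<bar>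
      \<le> 96 * \<kappa>^11 * \<kappa>B^3 * wbar^3 * G / \<gamma>^5 * inf_norm kx n Dx * \<eta> * real n ^ 2 * sqrt (real m) * real H ^ 2"
    and "j < ku \<Longrightarrow> \<bar>gu n m H AK B K wbar Du (\<lambda>_. Ms t) 0 j - gu n m H AK B K wbar Du (histof Ms) (int t) j\<bar>
      \<le> 96 * \<kappa>^11 * \<kappa>B^3 * wbar^3 * G / \<gamma>^5 * (\<kappa> * inf_norm ku m Du) * \<eta> * real n ^ 2 * sqrt (real m) * real H ^ 2"
proof -
  define L where "L = 24 * G * \<kappa>^5 * response_gain^2 * sqrt (real n) * sqrt (real m) * real H / \<gamma>"
  have "0 \<le> L" unfolding L_def using G_pos \<kappa>_ge_1 \<gamma>_pos by simp
  have grad: "param_norm H m n g \<le> L"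
    if "s \<le> T" "M \<in> Om" "pgrad H m n (fring P c n m H AK B K s) M g" for s M g
    unfolding L_def using fring_pgrad_le that(2,3) assms(2,4,5) by blast
  have hist: "param_norm H m n (\<lambda>i' a b. Ms t i' a b - histof Ms \<tau> i' a b) \<le> 2 * \<eta> * L * real i"
    if "\<tau> \<le> int t" "int t - \<tau> \<le> int i" for \<tau> i
    by (rule ogd_bz_history_dist_le[OF ogd \<open>0 < \<eta>\<close> \<open>0 \<le> L\<close>]) (use grad that \<open>t \<le> T\<close> in auto)
  have "0 \<le> 2 * \<eta> * L" using \<open>0 < \<eta>\<close> \<open>0 \<le> L\<close> by simp
  have "sqrt (real n) ^ 4 = real n ^ 2"
    by (metis real_sqrt_pow2 of_nat_0_le_iff power_mult numeral_Bit0 mult_2)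
  then have total: "wbar * D * (real (2*H) * (\<kappa>^2 * \<kappa>B * sqrt (real n) * (2 * \<eta> * L) / \<gamma>^2))
      = 96 * \<kappa>^11 * \<kappa>B^3 * wbar^3 * G / \<gamma>^5 * D * \<eta> * real n ^ 2 * sqrt (real m) * real H ^ 2" for D
    unfolding L_def response_gain_def using \<gamma>_pos by (simp add: field_simps power_numeral_reduce power2_eq_square)
  show "j < kx \<Longrightarrow> \<bar>gx n m H AK B wbar Dx (\<lambda>_. Ms t) 0 j - gx n m H AK B wbar Dx (histof Ms) (int t) j\<bar>
      \<le> 96 * \<kappa>^11 * \<kappa>B^3 * wbar^3 * G / \<gamma>^5 * inf_norm kx n Dx * \<eta> * real n ^ 2 * sqrt (real m) * real H ^ 2"
    using gx_deviation_le[OF \<open>0 \<le> 2 * \<eta> * L\<close>, of j kx "Ms t" "histof Ms" "int t"] hist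
    unfolding total by auto
  show "j < ku \<Longrightarrow> \<bar>gu n m H AK B K wbar Du (\<lambda>_. Ms t) 0 j - gu n m H AK B K wbar Du (histof Ms) (int t) j\<bar>
      \<le> 96 * \<kappa>^11 * \<kappa>B^3 * wbar^3 * G / \<gamma>^5 * (\<kappa> * inf_norm ku m Du) * \<eta> * real n ^ 2 * sqrt (real m) * real H ^ 2"
    using gu_deviation_le[OF \<open>0 \<le> 2 * \<eta> * L\<close>, of j ku "histof Ms" "int t" "Ms t"] hist
    unfolding total by (auto simp: histof_def)
qed

end

section \<open>The polynomial constant\<close>

definition deviation_poly :: "(real \<times> nat list) list" where
  "deviation_poly = [(96, [1, 0, 12, 3, 5, 3, 1]), (96, [0, 1, 12, 3, 5, 3, 1]), (96, [0, 0, 12, 3, 5, 3, 1])]"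

lemma peval_deviation_poly:
  "peval deviation_poly [a, b, k, kB, q, w, g] = 96 * k^12 * kB^3 * q^5 * w^3 * g * (a + b + 1)"
  by (simp add: peval_def deviation_poly_def eval_nat_numeral lessThan_Suc algebra_simps)

lemma deviation_poly_pos:
  "0 \<le> a \<Longrightarrow> 0 \<le> b \<Longrightarrow> 0 < k \<Longrightarrow> 0 < kB \<Longrightarrow> 0 < q \<Longrightarrow> 0 < w \<Longrightarrow> 0 < g
    \<Longrightarrow> 0 < peval deviation_poly [a, b, k, kB, q, w, g]"
  unfolding peval_deviation_poly by simp

lemma deviation_poly_dominates:
  assumes "0 \<le> X" "X \<le> \<kappa> * (a + b + 1)" "1 \<le> \<kappa>" "0 < \<gamma>" "0 \<le> \<kappa>B" "0 \<le> w" "0 \<le> G" "0 \<le> \<eta>"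
  shows "96 * \<kappa>^11 * \<kappa>B^3 * w^3 * G / \<gamma>^5 * X * \<eta> * real n ^ 2 * sqrt (real m) * real H ^ 2
    \<le> peval deviation_poly [a, b, \<kappa>, \<kappa>B, 1 / \<gamma>, w, G] * \<eta> * real n ^ 2 * sqrt (real m) * real H ^ 2"
proof -
  have "96 * \<kappa>^11 * \<kappa>B^3 * w^3 * G / \<gamma>^5 * X \<le> 96 * \<kappa>^11 * \<kappa>B^3 * w^3 * G / \<gamma>^5 * (\<kappa> * (a + b + 1))"
    using assms by (intro mult_left_mono) auto
  also have "\<dots> = peval deviation_poly [a, b, \<kappa>, \<kappa>B, 1 / \<gamma>, w, G]"
    unfolding peval_deviation_poly by (simp add: power_one_over field_simps power_numeral_reduce)
  finally have "96 * \<kappa>^11 * \<kappa>B^3 * w^3 * G / \<gamma>^5 * X * (\<eta> * real n ^ 2 * sqrt (real m) * real H ^ 2)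
      \<le> peval deviation_poly [a, b, \<kappa>, \<kappa>B, 1 / \<gamma>, w, G] * (\<eta> * real n ^ 2 * sqrt (real m) * real H ^ 2)"
    using \<open>0 \<le> \<eta>\<close> by (intro mult_right_mono) auto
  then show ?thesis by (simp add: mult.assoc)
qed

lemma ogd_bz_constraint_deviation_bound:
  assumes "1 \<le> n" "1 \<le> m" "0 < \<gamma>" "\<gamma> < 1" "1 \<le> \<kappa>" and stable: "strongly_stable n m A B \<kappa> \<gamma> K"
    and "0 < wbar" "noise_model n wbar P" "0 < G" "cost_model n m G c" "0 < \<eta>"
    and ogd: "ogd_bz (\<lambda>t. fring P c n m H (closed_loop m A B K) B K t) H m n
      (Omega n m kx ku H (closed_loop m A B K) B K wbar Dx dx Du du \<kappa> \<gamma> \<epsilon>) \<eta> T Ms"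
  shows "\<forall>t\<le>T.
    (\<forall>i<kx. \<bar>gx n m H (closed_loop m A B K) B wbar Dx (\<lambda>_. Ms t) 0 i
              - gx n m H (closed_loop m A B K) B wbar Dx (histof Ms) (int t) i\<bar>
      \<le> peval deviation_poly [inf_norm kx n Dx, inf_norm ku m Du, \<kappa>, max (spec_norm n m B) 1, 1 / \<gamma>, wbar, G]
          * \<eta> * real n ^ 2 * sqrt (real m) * real H ^ 2) \<and>
    (\<forall>j<ku. \<bar>gu n m H (closed_loop m A B K) B K wbar Du (\<lambda>_. Ms t) 0 j
              - gu n m H (closed_loop m A B K) B K wbar Du (histof Ms) (int t) j\<bar>
      \<le> peval deviation_poly [inf_norm kx n Dx, inf_norm ku m Du, \<kappa>, max (spec_norm n m B) 1, 1 / \<gamma>, wbar, G]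
          * \<eta> * real n ^ 2 * sqrt (real m) * real H ^ 2)"
proof -
  let ?\<kappa>B = "max (spec_norm n m B) 1"
  let ?c2 = "peval deviation_poly [inf_norm kx n Dx, inf_norm ku m Du, \<kappa>, ?\<kappa>B, 1 / \<gamma>, wbar, G]"
  interpret closed_loop_setting n m H "closed_loop m A B K" B K \<kappa> \<gamma> ?\<kappa>B wbar G c P
    using assms strongly_stable_op_bound_mpow[OF stable] strongly_stable_op_bound_gain[OF stable]
      op_bound_mono[OF op_bound_spec_norm, of n m B ?\<kappa>B]
    by unfold_locales auto
  have Om: "Omega n m kx ku H (closed_loop m A B K) B K wbar Dx dx Du du \<kappa> \<gamma> \<epsilon> \<subseteq> Mset n m H \<kappa> \<gamma>"
    unfolding Omega_def by auto
  note deviation = ogd_bz_constraint_deviation[OF ogd Om \<open>0 < \<eta>\<close> \<open>1 \<le> n\<close> \<open>1 \<le> m\<close>]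
  note dominates = deviation_poly_dominates[OF _ _ \<kappa>_ge_1 \<gamma>_pos _ _ _ less_imp_le[OF \<open>0 < \<eta>\<close>]]
  have norms: "0 \<le> inf_norm kx n Dx" "0 \<le> inf_norm ku m Du" by (rule inf_norm_nonneg)+
  have "inf_norm kx n Dx \<le> 1 * (inf_norm kx n Dx + inf_norm ku m Du + 1)" using norms by simp
  also have "\<dots> \<le> \<kappa> * (inf_norm kx n Dx + inf_norm ku m Du + 1)"
    using norms \<kappa>_ge_1 by (intro mult_right_mono) auto
  finally have Dx: "inf_norm kx n Dx \<le> \<kappa> * (inf_norm kx n Dx + inf_norm ku m Du + 1)" .
  have Du: "\<kappa> * inf_norm ku m Du \<le> \<kappa> * (inf_norm kx n Dx + inf_norm ku m Du + 1)"
    using norms \<kappa>_ge_1 by (intro mult_left_mono) auto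
  have "\<bar>gx n m H (closed_loop m A B K) B wbar Dx (\<lambda>_. Ms t) 0 i
      - gx n m H (closed_loop m A B K) B wbar Dx (histof Ms) (int t) i\<bar>
    \<le> ?c2 * \<eta> * real n ^ 2 * sqrt (real m) * real H ^ 2" if "t \<le> T" "i < kx" for t i
    using order_trans[OF deviation(1)[OF that] dominates[OF norms(1) Dx]] \<open>0 < wbar\<close> \<open>0 < G\<close> by simp
  moreover have "\<bar>gu n m H (closed_loop m A B K) B K wbar Du (\<lambda>_. Ms t) 0 j
      - gu n m H (closed_loop m A B K) B K wbar Du (histof Ms) (int t) j\<bar>
    \<le> ?c2 * \<eta> * real n ^ 2 * sqrt (real m) * real H ^ 2" if "t \<le> T" "j < ku" for t j
    using order_trans[OF deviation(2)[OF that] dominates[OF _ Du]] norms \<kappa>_ge_1 \<open>0 < wbar\<close> \<open>0 < G\<close>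
    by simp
  ultimately show ?thesis by blast
qed

theorem lemma3:
  "\<exists>p :: (real \<times> nat list) list.
    \<forall>(n::nat) (m::nat) (kx::nat) (ku::nat) (A::matr) (B::matr) (K::matr)
      (Dx::matr) (dx::vecr) (Du::matr) (du::vecr) (\<kappa>::real) (\<gamma>::real) (wbar::real) (G::real)
      (P::(nat \<Rightarrow> vecr) measure) (c::nat \<Rightarrow> vecr \<Rightarrow> vecr \<Rightarrow> real)
      (H::nat) (\<epsilon>::real) (\<eta>::real) (T::nat) (Ms::nat \<Rightarrow> param).
      1 \<le> n \<and> 1 \<le> m \<and> 0 < \<gamma> \<and> \<gamma> < 1 \<and> 1 \<le> \<kappa> \<and>
      strongly_stable n m A B \<kappa> \<gamma> K \<and>
      0 < wbar \<and> noise_model n wbar P \<and>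
      0 < G \<and> cost_model n m G c \<and>
      real H \<ge> ln (2 * \<kappa>^2) / ln (1 / (1 - \<gamma>)) \<and>
      Omega n m kx ku H (closed_loop m A B K) B K wbar Dx dx Du du \<kappa> \<gamma> \<epsilon> \<noteq> {} \<and>
      0 < \<eta> \<and>
      ogd_bz (\<lambda>t. fring P c n m H (closed_loop m A B K) B K t) H m n
             (Omega n m kx ku H (closed_loop m A B K) B K wbar Dx dx Du du \<kappa> \<gamma> \<epsilon>) \<eta> T Ms
      \<longrightarrow>
      (let c2 = peval p [inf_norm kx n Dx, inf_norm ku m Du, \<kappa>, max (spec_norm n m B) 1,
                         1 / \<gamma>, wbar, G];
           eps2 = c2 * \<eta> * real n ^ 2 * sqrt (real m) * real H ^ 2
       in 0 < c2 \<and>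
          (\<forall>t\<le>T.
             (\<forall>i<kx. \<bar>gx n m H (closed_loop m A B K) B wbar Dx (\<lambda>_. Ms t) 0 i
                       - gx n m H (closed_loop m A B K) B wbar Dx (histof Ms) (int t) i\<bar> \<le> eps2) \<and>
             (\<forall>j<ku. \<bar>gu n m H (closed_loop m A B K) B K wbar Du (\<lambda>_. Ms t) 0 j
                       - gu n m H (closed_loop m A B K) B K wbar Du (histof Ms) (int t) j\<bar> \<le> eps2)))"
  unfolding Let_def
  by (intro exI[of _ deviation_poly] allI impI, elim conjE, intro conjI)
    (simp_all add: deviation_poly_pos inf_norm_nonneg ogd_bz_constraint_deviation_bound)

end
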